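(* Let $\Gamma$ be a finite normal-form game and let $\vec\sigma$ be a non-degenerate Nash equilibrium of $\Gamma$. Then $\vec\sigma$ is strongly punishable: for every $\epsilon>0$ there exists $\delta>0$ such that for every game $\Gamma'=(P,A,U')$ with $d(\Gamma,\Gamma')<\delta$ there is a Nash equilibrium $\vec\sigma'$ of $\Gamma'$ with $\sigma_i'(A_i)=\sigma_i(A_i)$ for all $i\in P$ and $u_i'(\vec\sigma')-u_i(\vec\sigma)<\epsilon$ for all $i\in P$.
   Context: A finite normal-form game is $\Gamma=(P,A,U)$ with players $P=\{1,\dots,n\}$, action profiles $A=A_1\times\cdots\times A_n$ where $A_i=\{a_i^1,\dots,a_i^{N_i}\}$ is finite, and $U=(u_1,\dots,u_n)$ with $u_i:A\to\mathbb R$. Utilities are extended to mixed strategy profiles by expectation; $\sigma_i^j$ denotes the probability that $\sigma_i$ assigns to $a_i^j$, and $\sigma_i(A_i)$ the support of $\sigma_i$. The distance between games $\Gamma=(P,A,U)$ and $\Gamma'=(P',A',U')$ is $d(\Gamma,\Gamma')=+\infty$ if $P\neq P'$ or $A\neq A'$, and $d(\Gamma,\Gamma')=\max_{i\in P,\vec a\in A}|u_i(\vec a)-u_i'(\vec a)|$ otherwise. Non-degeneracy: let $\vec\sigma$ be a Nash equilibrium with actions labelled so that $\sigma_i(A_i)=\{a_i^1,\dots,a_i^{M_i}\}$. For variables $\vec p=(p_i^k)_{i\in P,\,1\le k\le M_i}$ write $u_i(a,\vec p_{-i}):=\sum u_i(a,(a_j^{k_j})_{j\ne i})\prod_{j\neq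 i}p_j^{k_j}$, the sum over all choices $k_j\le M_j$ ($j\ne i$). The characteristic function $f_{\vec\sigma}:\mathbb R^{\sum_i M_i}\to\mathbb R^{\sum_i M_i}$ has components $\sum_{k=1}^{M_i}p_i^k$ for each $i\in P$, and $u_i(a_i^1,\vec p_{-i})-u_i(a_i^k,\vec p_{-i})$ for each $i\in P$ and $2\le k\le M_i$. The residual function $r_{\vec\sigma}$ has components $u_i(a_i^1,\vec p_{-i})-u_i(a_i^k,\vec p_{-i})$ for each $i\in P$ and $M_i<k\le N_i$. $\vec\sigma$ is non-degenerate if the Jacobian determinant $|Df_{\vec\sigma}(\vec\sigma)|\neq 0$ (evaluating at the vector of probabilities of $\vec\sigma$) and every component of $r_{\vec\sigma}(\vec\sigma)$ is strictly positive. *)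

theory Defs
  imports "HOL-Analysis.Analysis"
begin

text \<open>
  Finite normal-form game: players are 0..<n (i.e. P = {1..n} shifted), player i has
  actions 0..<N i, utilities u i a for pure profiles a (a j < N j for j < n).
\<close>

definition profiles :: "nat \<Rightarrow> (nat \<Rightarrow> nat) \<Rightarrow> (nat \<Rightarrow> nat) set" where
  "profiles n N = PiE {..<n} (\<lambda>i. {..<N i})"

definition eu :: "nat \<Rightarrow> (nat \<Rightarrow> nat) \<Rightarrow> (nat \<Rightarrow> (nat \<Rightarrow> nat) \<Rightarrow> real)
                  \<Rightarrow> nat \<Rightarrow> (nat \<Rightarrow> nat \<Rightarrow> real) \<Rightarrow> real" where
  "eu n N u i \<sigma> = (\<Sum>a\<in>profiles n N. u i a * (\<Prod>j<n. \<sigma> j (a j)))"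

definition mixed :: "(nat \<Rightarrow> nat) \<Rightarrow> nat \<Rightarrow> (nat \<Rightarrow> real) \<Rightarrow> bool" where
  "mixed N i \<tau> \<longleftrightarrow> (\<forall>k<N i. 0 \<le> \<tau> k) \<and> (\<Sum>k<N i. \<tau> k) = 1"

definition nash :: "nat \<Rightarrow> (nat \<Rightarrow> nat) \<Rightarrow> (nat \<Rightarrow> (nat \<Rightarrow> nat) \<Rightarrow> real)
                    \<Rightarrow> (nat \<Rightarrow> nat \<Rightarrow> real) \<Rightarrow> bool" where
  "nash n N u \<sigma> \<longleftrightarrow> (\<forall>i<n. mixed N i (\<sigma> i)) \<and>
     (\<forall>i<n. \<forall>\<tau>. mixed N i \<tau> \<longrightarrow> eu n N u i (\<sigma>(i := \<tau>)) \<le> eu n N u i \<sigma>)"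

definition support :: "(nat \<Rightarrow> nat) \<Rightarrow> (nat \<Rightarrow> nat \<Rightarrow> real) \<Rightarrow> nat \<Rightarrow> nat set" where
  "support N \<sigma> i = {k. k < N i \<and> \<sigma> i k \<noteq> 0}"

definition game_dist :: "nat \<Rightarrow> (nat \<Rightarrow> nat) \<Rightarrow> (nat \<Rightarrow> (nat \<Rightarrow> nat) \<Rightarrow> real)
                          \<Rightarrow> (nat \<Rightarrow> (nat \<Rightarrow> nat) \<Rightarrow> real) \<Rightarrow> real" where
  "game_dist n N u u' = Max ((\<lambda>(i, a). \<bar>u i a - u' i a\<bar>) ` ({..<n} \<times> profiles n N))"

text \<open>u_i(a, p_{-i}): variables p (j,k) for k in the support S j.\<close>
definition upart :: "nat \<Rightarrow> (nat \<Rightarrow> nat set) \<Rightarrow> (nat \<Rightarrow> (nat \<Rightarrow> nat) \<Rightarrow> real)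
                     \<Rightarrow> nat \<Rightarrow> nat \<Rightarrow> (nat \<times> nat \<Rightarrow> real) \<Rightarrow> real" where
  "upart n S u i a p = (\<Sum>b\<in>PiE {..<n} (\<lambda>j. if j = i then {a} else S j).
       u i b * (\<Prod>j\<in>{..<n} - {i}. p (j, b j)))"

text \<open>Labelling: a_i^1 is the least action in the support.\<close>
definition ref_act :: "(nat \<Rightarrow> nat set) \<Rightarrow> nat \<Rightarrow> nat" where
  "ref_act S i = Min (S i)"

definition var_idx :: "nat \<Rightarrow> (nat \<Rightarrow> nat set) \<Rightarrow> (nat \<times> nat) set" where
  "var_idx n S = {(i, k). i < n \<and> k \<in> S i}"

definition charf :: "nat \<Rightarrow> (nat \<Rightarrow> nat set) \<Rightarrow> (nat \<Rightarrow> (nat \<Rightarrow> nat) \<Rightarrow> real)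
                     \<Rightarrow> (nat \<times> nat \<Rightarrow> real) \<Rightarrow> nat \<times> nat \<Rightarrow> real" where
  "charf n S u p c = (case c of (i, k) \<Rightarrow>
     if k = ref_act S i then (\<Sum>l\<in>S i. p (i, l))
     else upart n S u i (ref_act S i) p - upart n S u i k p)"

definition det_on :: "'a set \<Rightarrow> ('a \<Rightarrow> 'a \<Rightarrow> real) \<Rightarrow> real" where
  "det_on I M = (\<Sum>\<pi> \<in> {\<pi>. \<pi> permutes I}. of_int (sign \<pi>) * (\<Prod>x\<in>I. M x (\<pi> x)))"

definition nondegenerate :: "nat \<Rightarrow> (nat \<Rightarrow> nat) \<Rightarrow> (nat \<Rightarrow> (nat \<Rightarrow> nat) \<Rightarrow> real)
                             \<Rightarrow> (nat \<Rightarrow> nat \<Rightarrow> real) \<Rightarrow> bool" where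
  "nondegenerate n N u \<sigma> \<longleftrightarrow>
     (let S = support N \<sigma>; I = var_idx n S; p0 = (\<lambda>(j, l). \<sigma> j l) in
       det_on I (\<lambda>c v. deriv (\<lambda>t. charf n S u (p0(v := t)) c) (p0 v)) \<noteq> 0 \<and>
       (\<forall>i<n. \<forall>k<N i. k \<notin> S i \<longrightarrow>
          upart n S u i (ref_act S i) p0 - upart n S u i k p0 > 0))"

end

theory Submission
  imports Defs "Jordan_Normal_Form.Determinant"
begin

text \<open>Non-degeneracy makes the Jacobian \<open>L\<close> of the characteristic function \<open>f\<close> at \<open>\<sigma>\<close>
  invertible. Since \<open>f\<close> is multi-affine in the probabilities, for a game at distance \<open>\<delta>\<close> the
  perturbed characteristic function \<open>f'\<close> satisfies \<open>f' p - f' q - L (p - q) = O((r + \<delta>) |p - q|)\<close>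
  on an \<open>r\<close>-ball around \<open>\<sigma>\<close>, and \<open>f' \<sigma> - f \<sigma> = O(\<delta>)\<close>. Hence the quasi-Newton map
  \<open>p \<mapsto> p - L\<^sup>-\<^sup>1 (f' p - f \<sigma>)\<close> contracts the ball, and its fixed point solves \<open>f' p = f \<sigma>\<close>:
  every player's probabilities sum to one and the supported actions are indifferent. For small
  \<open>r\<close> and \<open>\<delta>\<close> the fixed point stays positive on the supports, and the strictly positive residuals
  survive the perturbation, so unsupported actions remain unprofitable. Thus \<open>p\<close> is a Nash
  equilibrium of the perturbed game with the same supports, and its payoffs differ from the
  original ones by \<open>O(r + \<delta>)\<close>.\<close>

section \<open>Estimates for products\<close>

lemma prod_abs_le_power:
  fixes a :: "'x \<Rightarrow> real"
  assumes "\<forall>j\<in>J. \<bar>a j\<bar> \<le> B"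
  shows "\<bar>prod a J\<bar> \<le> B ^ card J"
proof (cases "finite J")
  case True
  have "\<bar>prod a J\<bar> = prod (\<lambda>j. \<bar>a j\<bar>) J" by (simp add: abs_prod)
  also have "\<dots> \<le> prod (\<lambda>j. B) J" by (rule prod_mono) (use assms in auto)
  finally show ?thesis by simp
next
  case False then show ?thesis by simp
qed

lemma prod_diff_abs_le:
  fixes a b :: "'x \<Rightarrow> real"
  assumes "finite J" "\<forall>j\<in>J. \<bar>a j\<bar> \<le> B" "\<forall>j\<in>J. \<bar>b j\<bar> \<le> B" "1 \<le> B"
    "\<forall>j\<in>J. \<bar>a j - b j\<bar> \<le> d"
  shows "\<bar>prod a J - prod b J\<bar> \<le> real (card J) * B ^ card J * d"
  using assms
proof (induction J rule: finite_induct)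
  case empty then show ?case by simp
next
  case (insert x J)
  let ?k = "card J"
  have IH: "\<bar>prod a J - prod b J\<bar> \<le> real ?k * B ^ ?k * d" using insert by auto
  have pa: "\<bar>prod a J\<bar> \<le> B ^ ?k" using insert by (intro prod_abs_le_power) auto
  have dx: "\<bar>a x - b x\<bar> \<le> d" and bx: "\<bar>b x\<bar> \<le> B" using insert by auto
  have d0: "0 \<le> d" using dx by linarith
  have B0: "0 \<le> B" using insert by linarith
  have eq: "prod a (insert x J) - prod b (insert x J) = (a x - b x) * prod a J + b x * (prod a J - prod b J)"
    using insert by (simp add: algebra_simps)
  have "\<bar>(a x - b x) * prod a J\<bar> \<le> d * B ^ ?k"
    unfolding abs_mult by (rule mult_mono) (use dx pa d0 in auto)
  moreover have "\<bar>b x * (prod a J - prod b J)\<bar> \<le> B * (real ?k * B ^ ?k * d)"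
    unfolding abs_mult by (rule mult_mono) (use bx IH B0 in auto)
  moreover have "d * B ^ ?k \<le> d * B ^ Suc ?k"
    using d0 insert(6) by (intro mult_left_mono) (auto intro: power_increasing)
  ultimately have "\<bar>prod a (insert x J) - prod b (insert x J)\<bar> \<le> d * B ^ Suc ?k + B * (real ?k * B ^ ?k * d)"
    unfolding eq by linarith
  also have "\<dots> = real (card (insert x J)) * B ^ card (insert x J) * d"
    using insert by (simp add: algebra_simps)
  finally show ?case .
qed

lemma sum_mult_prod_remove_insert:
  fixes f c :: "'x \<Rightarrow> 'r::comm_ring_1"
  assumes "finite J" "x \<notin> J"
  shows "(\<Sum>j\<in>insert x J. f j * prod c (insert x J - {j})) = f x * prod c J + c x * (\<Sum>j\<in>J. f j * prod c (J - {j}))"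
proof -
  have "(\<Sum>j\<in>J. f j * prod c (insert x J - {j})) = (\<Sum>j\<in>J. c x * (f j * prod c (J - {j})))"
  proof (rule sum.cong)
    fix j assume "j \<in> J"
    then have "insert x J - {j} = insert x (J - {j})" using assms by auto
    then show "f j * prod c (insert x J - {j}) = c x * (f j * prod c (J - {j}))"
      using assms by (simp add: algebra_simps)
  qed simp
  moreover have "insert x J - {x} = J" using assms by auto
  ultimately show ?thesis using assms by (simp add: sum_distrib_left)
qed

lemma abs_sum_mult_prod_remove_le:
  fixes f c :: "'x \<Rightarrow> real"
  assumes "finite J" "\<forall>j\<in>J. \<bar>f j\<bar> \<le> d" "\<forall>j\<in>J. \<bar>c j\<bar> \<le> B" "1 \<le> B"
  shows "\<bar>\<Sum>j\<in>J. f j * prod c (J - {j})\<bar> \<le> real (card J) * (d * B ^ card J)"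
proof -
  have "\<bar>f j * prod c (J - {j})\<bar> \<le> d * B ^ card J" if j: "j \<in> J" for j
  proof -
    have "\<bar>prod c (J - {j})\<bar> \<le> B ^ card (J - {j})" using assms by (intro prod_abs_le_power) auto
    also have "\<dots> \<le> B ^ card J" using assms by (intro power_increasing) (auto simp: card_Diff1_le)
    finally show ?thesis unfolding abs_mult using assms j by (intro mult_mono) auto
  qed
  then have "\<bar>\<Sum>j\<in>J. f j * prod c (J - {j})\<bar> \<le> (\<Sum>j\<in>J. d * B ^ card J)"
    by (intro order_trans[OF sum_abs] sum_mono)
  then show ?thesis by simp
qed

lemma prod_linearization_error_le:
  fixes a b c :: "'x \<Rightarrow> real"
  assumes "finite J" "\<forall>j\<in>J. \<bar>a j\<bar> \<le> B" "\<forall>j\<in>J. \<bar>b j\<bar> \<le> B" "\<forall>j\<in>J. \<bar>c j\<bar> \<le> B" "1 \<le> B"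
    "\<forall>j\<in>J. \<bar>a j - c j\<bar> \<le> r" "\<forall>j\<in>J. \<bar>b j - c j\<bar> \<le> r" "\<forall>j\<in>J. \<bar>a j - b j\<bar> \<le> d"
  shows "\<bar>prod a J - prod b J - (\<Sum>j\<in>J. (a j - b j) * prod c (J - {j}))\<bar>
           \<le> 2 * real (card J)^2 * B ^ card J * r * d"
  using assms
proof (induction J rule: finite_induct)
  case empty then show ?case by simp
next
  case (insert x J)
  let ?k = "card J"
  let ?S = "\<Sum>j\<in>J. (a j - b j) * prod c (J - {j})"
  have IH: "\<bar>prod a J - prod b J - ?S\<bar> \<le> 2 * real ?k ^ 2 * B ^ ?k * r * d" using insert by auto
  have dx: "\<bar>a x - b x\<bar> \<le> d" and ax: "\<bar>a x\<bar> \<le> B" and rx: "\<bar>a x - c x\<bar> \<le> r" using insert by auto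
  have d0: "0 \<le> d" using dx by linarith
  have r0: "0 \<le> r" using rx by linarith
  have B0: "0 \<le> B" using insert by linarith
  have B1: "1 \<le> B" using insert by auto
  have bc: "\<bar>prod b J - prod c J\<bar> \<le> real ?k * B ^ ?k * r"
    using insert by (intro prod_diff_abs_le) auto
  have Sb: "\<bar>?S\<bar> \<le> real ?k * (d * B ^ ?k)"
    using insert d0 by (intro abs_sum_mult_prod_remove_le) auto
  have sumeq: "(\<Sum>j\<in>insert x J. (a j - b j) * prod c (insert x J - {j}))
      = (a x - b x) * prod c J + c x * ?S"
    using insert by (intro sum_mult_prod_remove_insert)
  have eq: "prod a (insert x J) - prod b (insert x J) - (\<Sum>j\<in>insert x J. (a j - b j) * prod c (insert x J - {j}))
     = a x * (prod a J - prod b J - ?S) + (a x - c x) * ?S + (a x - b x) * (prod b J - prod c J)"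
    unfolding sumeq using insert by (simp add: algebra_simps)
  have t1: "\<bar>a x * (prod a J - prod b J - ?S)\<bar> \<le> B * (2 * real ?k ^ 2 * B ^ ?k * r * d)"
    unfolding abs_mult by (rule mult_mono) (use ax IH B0 in auto)
  have t2: "\<bar>(a x - c x) * ?S\<bar> \<le> r * (real ?k * (d * B ^ ?k))"
    unfolding abs_mult by (rule mult_mono) (use rx Sb r0 in auto)
  have t3: "\<bar>(a x - b x) * (prod b J - prod c J)\<bar> \<le> d * (real ?k * B ^ ?k * r)"
    unfolding abs_mult by (rule mult_mono) (use dx bc d0 in auto)
  have pos: "0 \<le> real ?k * B ^ ?k * r * d" using r0 d0 B0 by simp
  have mono: "real ?k * B ^ ?k * r * d \<le> real ?k * B ^ Suc ?k * r * d"
  proof -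
    have "B ^ ?k \<le> B ^ Suc ?k" using B1 by (intro power_increasing) auto
    then show ?thesis using r0 d0 by (intro mult_right_mono mult_left_mono) auto
  qed
  have "\<bar>prod a (insert x J) - prod b (insert x J) - (\<Sum>j\<in>insert x J. (a j - b j) * prod c (insert x J - {j}))\<bar>
     \<le> B * (2 * real ?k ^ 2 * B ^ ?k * r * d) + 2 * (real ?k * B ^ ?k * r * d)"
    unfolding eq using t1 t2 t3 by (simp add: algebra_simps)
  also have "\<dots> \<le> 2 * real ?k ^ 2 * B ^ Suc ?k * r * d + 2 * (real ?k * B ^ Suc ?k * r * d)"
    using mono by (simp add: algebra_simps)
  also have "\<dots> \<le> 2 * real (Suc ?k) ^ 2 * B ^ Suc ?k * r * d"
  proof -
    have "0 \<le> B ^ Suc ?k * r * d" using B0 r0 d0 by simp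
    then have "(2 * real ?k ^ 2 + 2 * real ?k) * (B ^ Suc ?k * r * d) \<le> (2 * real (Suc ?k) ^ 2) * (B ^ Suc ?k * r * d)"
      by (intro mult_right_mono) (auto simp: power2_eq_square algebra_simps)
    then show ?thesis by (simp add: algebra_simps)
  qed
  finally show ?case using insert by simp
qed

lemma sum_abs_mult_le:
  fixes w X :: "'b \<Rightarrow> real"
  assumes "\<And>b. b \<in> B \<Longrightarrow> \<bar>X b\<bar> \<le> C"
  shows "\<bar>\<Sum>b\<in>B. w b * X b\<bar> \<le> (\<Sum>b\<in>B. \<bar>w b\<bar>) * C"
proof -
  have "\<bar>\<Sum>b\<in>B. w b * X b\<bar> \<le> (\<Sum>b\<in>B. \<bar>w b\<bar> * \<bar>X b\<bar>)" unfolding abs_mult[symmetric] by (rule sum_abs)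
  also have "\<dots> \<le> (\<Sum>b\<in>B. \<bar>w b\<bar> * C)" by (intro sum_mono mult_left_mono assms) simp_all
  finally show ?thesis by (simp add: sum_distrib_right)
qed

section \<open>A contraction principle in \<open>\<ell>\<^sub>1\<close>\<close>

lemma geometric_increments_convergent:
  fixes x :: "nat \<Rightarrow> real"
  assumes incr: "\<And>k. \<bar>x (Suc k) - x k\<bar> \<le> q ^ k * D" and q: "0 \<le> q" "q < 1"
  shows "convergent x"
proof -
  have "summable (\<lambda>k. x (Suc k) - x k)"
    by (rule summable_comparison_test[of _ "\<lambda>k. q ^ k * D"]) (use incr q in \<open>auto intro: summable_mult2\<close>)
  then have "convergent (\<lambda>k. x 0 + (\<Sum>j<k. x (Suc j) - x j))"
    by (intro convergent_add convergent_const) (simp add: summable_iff_convergent[symmetric])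
  then show ?thesis by (simp add: sum_lessThan_telescope)
qed
lemma contraction_iterates_converge:
  fixes T :: "('a \<Rightarrow> real) \<Rightarrow> ('a \<Rightarrow> real)" and z :: "'a \<Rightarrow> real"
  assumes fin: "finite I" and r0: "0 \<le> r"
    and X_def: "X = {p. (\<Sum>c\<in>I. \<bar>p c - z c\<bar>) \<le> r \<and> (\<forall>c. c \<notin> I \<longrightarrow> p c = z c)}"
    and maps: "\<forall>p\<in>X. T p \<in> X"
    and contr: "\<forall>p\<in>X. \<forall>q\<in>X. (\<Sum>c\<in>I. \<bar>T p c - T q c\<bar>) \<le> 1/2 * (\<Sum>c\<in>I. \<bar>p c - q c\<bar>)"
  shows "\<exists>p\<in>X. \<forall>c. (\<lambda>k. (T ^^ k) z c) \<longlonglongrightarrow> p c"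
proof -
  define nr where "nr p q = (\<Sum>c\<in>I. \<bar>p c - q c\<bar>)" for p q :: "'a \<Rightarrow> real"
  define x where "x k = (T ^^ k) z" for k
  have xX: "x k \<in> X" for k
    by (induction k) (use r0 maps in \<open>auto simp: x_def X_def\<close>)
  define D0 where "D0 = nr (x 1) (x 0)"
  have Dk: "nr (x (Suc k)) (x k) \<le> (1/2)^k * D0" for k
  proof (induction k)
    case 0 then show ?case by (simp add: D0_def)
  next
    case (Suc k)
    have "nr (x (Suc (Suc k))) (x (Suc k)) \<le> 1/2 * nr (x (Suc k)) (x k)"
      using contr[rule_format, OF xX[of "Suc k"] xX[of k]] unfolding nr_def x_def by simp
    also have "\<dots> \<le> 1/2 * ((1/2)^k * D0)" using Suc by simp
    finally show ?case by simp
  qed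
  have conv: "convergent (\<lambda>k. x k c)" if c: "c \<in> I" for c
  proof (rule geometric_increments_convergent[of _ "1/2" D0])
    show "\<bar>x (Suc k) c - x k c\<bar> \<le> (1/2) ^ k * D0" for k
      using member_le_sum[OF c, of "\<lambda>c. \<bar>x (Suc k) c - x k c\<bar>"] fin Dk[of k] unfolding nr_def by simp
  qed auto
  define ps where "ps c = (if c \<in> I then lim (\<lambda>k. x k c) else z c)" for c
  have lim_ps: "(\<lambda>k. x k c) \<longlonglongrightarrow> ps c" for c
  proof (cases "c \<in> I")
    case True then show ?thesis using conv[OF True] unfolding ps_def by (simp add: convergent_LIMSEQ_iff)
  next
    case False
    have "x k c = z c" for k using xX[of k] False unfolding X_def by auto
    then show ?thesis using False unfolding ps_def by simp
  qed
  have "nr ps z \<le> r"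
    by (rule LIMSEQ_le_const2[of "\<lambda>k. nr (x k) z"]) (use xX lim_ps in \<open>auto simp: X_def nr_def intro!: tendsto_intros\<close>)
  then have "ps \<in> X" unfolding X_def nr_def ps_def by simp
  with lim_ps show ?thesis unfolding x_def by blast
qed

lemma contraction_fixpoint_l1:
  fixes T :: "('a \<Rightarrow> real) \<Rightarrow> ('a \<Rightarrow> real)" and z :: "'a \<Rightarrow> real"
  assumes fin: "finite I" and r0: "0 \<le> r"
    and X_def: "X = {p. (\<Sum>c\<in>I. \<bar>p c - z c\<bar>) \<le> r \<and> (\<forall>c. c \<notin> I \<longrightarrow> p c = z c)}"
    and maps: "\<forall>p\<in>X. T p \<in> X"
    and contr: "\<forall>p\<in>X. \<forall>q\<in>X. (\<Sum>c\<in>I. \<bar>T p c - T q c\<bar>) \<le> 1/2 * (\<Sum>c\<in>I. \<bar>p c - q c\<bar>)"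
  shows "\<exists>p\<in>X. T p = p"
proof -
  define x where "x k = (T ^^ k) z" for k
  obtain ps where psX: "ps \<in> X" and lim_ps: "\<And>c. (\<lambda>k. x k c) \<longlonglongrightarrow> ps c"
    using contraction_iterates_converge[OF assms] unfolding x_def by blast
  have xX: "x k \<in> X" for k
    by (induction k) (use r0 maps in \<open>auto simp: x_def X_def\<close>)
  have dist0: "(\<lambda>k. \<Sum>c'\<in>I. \<bar>x k c' - ps c'\<bar>) \<longlonglongrightarrow> 0"
    using tendsto_sum[of I "\<lambda>c' k. \<bar>x k c' - ps c'\<bar>" "\<lambda>_. 0"] lim_ps
    by (simp add: LIM_zero tendsto_rabs_zero)
  have "T ps c = ps c" for c
  proof (cases "c \<in> I")
    case True
    have "(\<lambda>k. x (Suc k) c - T ps c) \<longlonglongrightarrow> 0"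
    proof (rule Lim_null_comparison)
      show "\<forall>\<^sub>F k in sequentially. norm (x (Suc k) c - T ps c) \<le> 1/2 * (\<Sum>c'\<in>I. \<bar>x k c' - ps c'\<bar>)"
      proof (intro always_eventually allI)
        fix k
        have "\<bar>T (x k) c - T ps c\<bar> \<le> (\<Sum>c'\<in>I. \<bar>T (x k) c' - T ps c'\<bar>)"
          using fin True by (intro member_le_sum) auto
        also have "\<dots> \<le> 1/2 * (\<Sum>c'\<in>I. \<bar>x k c' - ps c'\<bar>)" using contr xX psX by blast
        finally show "norm (x (Suc k) c - T ps c) \<le> 1/2 * (\<Sum>c'\<in>I. \<bar>x k c' - ps c'\<bar>)"
          by (simp add: x_def)
      qed
      show "(\<lambda>k. 1/2 * (\<Sum>c'\<in>I. \<bar>x k c' - ps c'\<bar>)) \<longlonglongrightarrow> 0"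
        using tendsto_mult_left[OF dist0, of "1/2"] by simp
    qed
    then have "(\<lambda>k. x (Suc k) c) \<longlonglongrightarrow> T ps c" by (rule LIM_zero_cancel)
    moreover have "(\<lambda>k. x (Suc k) c) \<longlonglongrightarrow> ps c" using lim_ps[of c] by (rule LIMSEQ_Suc)
    ultimately show ?thesis by (rule LIMSEQ_unique)
  next
    case False
    then show ?thesis using maps psX unfolding X_def by auto
  qed
  then show ?thesis using psX by auto
qed

section \<open>Inverting a matrix with nonzero \<open>det_on\<close>\<close>

lemma det_on_eq_det_mat:
  fixes L :: "'a \<Rightarrow> 'a \<Rightarrow> real"
  assumes e: "bij_betw e {0..<m} I"
  shows "Determinant.det (mat m m (\<lambda>(x, y). L (e x) (e y))) = det_on I L"
proof -
  let ?A = "mat m m (\<lambda>(x, y). L (e x) (e y))"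
  let ?e' = "inv_into {0..<m} e"
  have e': "bij_betw ?e' I {0..<m}" using e by (rule bij_betw_inv_into)
  have inj: "inj_on e {0..<m}" using e by (auto simp: bij_betw_def)
  have "Determinant.det ?A = (\<Sum>p\<in>{p. p permutes {0..<m}}. of_int (sign p) * (\<Prod>i=0..<m. ?A $$ (i, p i)))"
    by (subst det_def') auto
  also have "\<dots> = (\<Sum>\<pi>\<in>{\<pi>. \<pi> permutes I}. of_int (sign \<pi>) * (\<Prod>x\<in>I. L x (\<pi> x)))"
  proof (rule sum.reindex_bij_witness[where j = "map_permutation {0..<m} e" and i = "map_permutation I ?e'"])
    fix p assume p: "p \<in> {p. p permutes {0..<m}}"
    then have pp: "p permutes {0..<m}" by simp
    show "map_permutation I ?e' (map_permutation {0..<m} e p) = p"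
      by (rule map_permutation_compose_inv[OF e pp]) (use inj in auto)
    show "map_permutation {0..<m} e p \<in> {\<pi>. \<pi> permutes I}"
      using map_permutation_permutes[OF e pp] by simp
    have "sign (map_permutation {0..<m} e p) = sign p"
      by (rule sign_map_permutation[OF inj pp]) simp
    moreover have "(\<Prod>x\<in>I. L x (map_permutation {0..<m} e p x)) = (\<Prod>i=0..<m. ?A $$ (i, p i))"
    proof -
      have "I = e ` {0..<m}" using e by (auto simp: bij_betw_def)
      then have "(\<Prod>x\<in>I. L x (map_permutation {0..<m} e p x))
          = (\<Prod>i\<in>{0..<m}. L (e i) (map_permutation {0..<m} e p (e i)))"
        using prod.reindex[OF inj] by simp
      also have "\<dots> = (\<Prod>i=0..<m. ?A $$ (i, p i))"
      proof (rule prod.cong)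
        fix i assume i: "i \<in> {0..<m}"
        have "p i \<in> {0..<m}" using pp i by (simp add: permutes_in_image)
        then show "L (e i) (map_permutation {0..<m} e p (e i)) = ?A $$ (i, p i)"
          using i by (simp add: map_permutation_apply[OF inj i])
      qed simp
      finally show ?thesis .
    qed
    ultimately show "of_int (sign (map_permutation {0..<m} e p)) * (\<Prod>x\<in>I. L x (map_permutation {0..<m} e p x))
        = of_int (sign p) * (\<Prod>i=0..<m. ?A $$ (i, p i))" by simp
  next
    fix \<pi> assume q: "\<pi> \<in> {\<pi>. \<pi> permutes I}"
    then have qq: "\<pi> permutes I" by simp
    show "map_permutation {0..<m} e (map_permutation I ?e' \<pi>) = \<pi>"
      by (rule map_permutation_compose_inv[OF e' qq]) (use e in \<open>auto simp: bij_betw_def f_inv_into_f\<close>)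
    show "map_permutation I ?e' \<pi> \<in> {p. p permutes {0..<m}}"
      using map_permutation_permutes[OF e' qq] by simp
  qed
  finally show ?thesis unfolding det_on_def by simp
qed

lemma reindexed_mat_mult_eq_one:
  fixes A B :: "real mat"
  assumes e: "bij_betw e {0..<m} I" and A: "A \<in> carrier_mat m m" and B: "B \<in> carrier_mat m m"
    and AB: "A * B = 1\<^sub>m m" and c: "c \<in> I" and d: "d \<in> I"
  defines "e' \<equiv> inv_into {0..<m} e"
  shows "(\<Sum>v\<in>I. A $$ (e' c, e' v) * B $$ (e' v, e' d)) = (if c = d then 1 else 0)"
proof -
  have e'I: "e' x \<in> {0..<m}" "e (e' x) = x" if "x \<in> I" for x
    using that e unfolding e'_def by (auto simp: bij_betw_def inv_into_into f_inv_into_f)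
  have inj: "inj_on e' I" by (metis e'I(2) inj_onI)
  have "e' ` I = {0..<m}"
    using bij_betw_imp_surj_on[OF bij_betw_inv_into[OF e]] unfolding e'_def .
  then have "(\<Sum>v\<in>I. A $$ (e' c, e' v) * B $$ (e' v, e' d)) = (\<Sum>y\<in>{0..<m}. A $$ (e' c, y) * B $$ (y, e' d))"
    using sum.reindex[OF inj, of "\<lambda>y. A $$ (e' c, y) * B $$ (y, e' d)"] by simp
  also have "\<dots> = (A * B) $$ (e' c, e' d)"
    using A B e'I(1)[OF c] e'I(1)[OF d] by (simp add: scalar_prod_def)
  also have "\<dots> = (if e' c = e' d then 1 else 0)"
    using AB e'I(1)[OF c] e'I(1)[OF d] by simp
  also have "(e' c = e' d) = (c = d)" using e'I(2)[OF c] e'I(2)[OF d] by metis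
  finally show ?thesis .
qed

lemma det_on_nonzero_imp_inverse:
  fixes L :: "'a \<Rightarrow> 'a \<Rightarrow> real"
  assumes fin: "finite I" and det: "det_on I L \<noteq> 0"
  shows "\<exists>M. (\<forall>c\<in>I. \<forall>d\<in>I. (\<Sum>v\<in>I. L c v * M v d) = (if c = d then 1 else 0)) \<and>
             (\<forall>c\<in>I. \<forall>d\<in>I. (\<Sum>v\<in>I. M c v * L v d) = (if c = d then 1 else 0))"
proof -
  obtain e where e: "bij_betw e {0..<card I} I" using ex_bij_betw_nat_finite[OF fin] by blast
  define A where "A = mat (card I) (card I) (\<lambda>(x, y). L (e x) (e y))"
  define e' where "e' = inv_into {0..<card I} e"
  have A: "A \<in> carrier_mat (card I) (card I)" unfolding A_def by simp
  have "Determinant.det A \<noteq> 0" using det det_on_eq_det_mat[OF e, of L] unfolding A_def by simp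
  then obtain B where B: "B \<in> carrier_mat (card I) (card I)"
    "A * B = 1\<^sub>m (card I)" "B * A = 1\<^sub>m (card I)"
    using det_non_zero_imp_unit[OF A, of "0::nat"] unfolding Units_def ring_mat_def by auto
  have e'I: "e' x \<in> {0..<card I}" "e (e' x) = x" if "x \<in> I" for x
    using that bij_betw_inv_into_right[OF e] bij_betwE[OF bij_betw_inv_into[OF e]]
    unfolding e'_def by auto
  have L_eq: "L c v = A $$ (e' c, e' v)" if "c \<in> I" "v \<in> I" for c v
    using e'I[OF that(1)] e'I[OF that(2)] unfolding A_def by simp
  show ?thesis
  proof (intro exI[of _ "\<lambda>c d. B $$ (e' c, e' d)"] conjI ballI)
    fix c d assume c: "c \<in> I" and d: "d \<in> I"
    have "(\<Sum>v\<in>I. L c v * B $$ (e' v, e' d)) = (\<Sum>v\<in>I. A $$ (e' c, e' v) * B $$ (e' v, e' d))"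
      using c by (intro sum.cong) (auto simp: L_eq)
    then show "(\<Sum>v\<in>I. L c v * B $$ (e' v, e' d)) = (if c = d then 1 else 0)"
      using reindexed_mat_mult_eq_one[OF e A B(1,2) c d] unfolding e'_def by simp
    have "(\<Sum>v\<in>I. B $$ (e' c, e' v) * L v d) = (\<Sum>v\<in>I. B $$ (e' c, e' v) * A $$ (e' v, e' d))"
      using d by (intro sum.cong) (auto simp: L_eq)
    then show "(\<Sum>v\<in>I. B $$ (e' c, e' v) * L v d) = (if c = d then 1 else 0)"
      using reindexed_mat_mult_eq_one[OF e B(1) A B(3) c d] unfolding e'_def by simp
  qed
qed

lemma sum_inverse_cancel:
  fixes L M :: "'a \<Rightarrow> 'a \<Rightarrow> real"
  assumes fin: "finite I" and inv: "\<forall>c\<in>I. \<forall>d\<in>I. (\<Sum>v\<in>I. M c v * L v d) = (if c = d then 1 else 0)" and c: "c \<in> I"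
  shows "(\<Sum>d\<in>I. M c d * (\<Sum>v\<in>I. L d v * h v)) = h c"
proof -
  have "(\<Sum>d\<in>I. M c d * (\<Sum>v\<in>I. L d v * h v)) = (\<Sum>d\<in>I. \<Sum>v\<in>I. M c d * L d v * h v)"
    by (simp add: sum_distrib_left mult.assoc)
  also have "\<dots> = (\<Sum>v\<in>I. \<Sum>d\<in>I. M c d * L d v * h v)" by (rule sum.swap)
  also have "\<dots> = (\<Sum>v\<in>I. (\<Sum>d\<in>I. M c d * L d v) * h v)" by (simp add: sum_distrib_right)
  also have "\<dots> = (\<Sum>v\<in>I. (if c = v then h v else 0))"
    by (rule sum.cong[OF refl]) (use inv c in auto)
  also have "\<dots> = h c" using fin c by simp
  finally show ?thesis .
qed

section \<open>Quasi-Newton zeros\<close>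

lemma sum_abs_matrix_mult_le:
  fixes M :: "'a \<Rightarrow> 'b \<Rightarrow> real"
  assumes "\<And>d. d \<in> J \<Longrightarrow> \<bar>g d\<bar> \<le> B"
  shows "(\<Sum>c\<in>I. \<bar>\<Sum>d\<in>J. M c d * g d\<bar>) \<le> (\<Sum>c\<in>I. \<Sum>d\<in>J. \<bar>M c d\<bar>) * B"
proof -
  have "(\<Sum>c\<in>I. \<bar>\<Sum>d\<in>J. M c d * g d\<bar>) \<le> (\<Sum>c\<in>I. (\<Sum>d\<in>J. \<bar>M c d\<bar>) * B)"
    by (intro sum_mono sum_abs_mult_le assms)
  then show ?thesis by (simp add: sum_distrib_right)
qed

lemma left_inverse_residual:
  fixes L M :: "'a \<Rightarrow> 'a \<Rightarrow> real"
  assumes "finite I" and "\<forall>c\<in>I. \<forall>d\<in>I. (\<Sum>v\<in>I. M c v * L v d) = (if c = d then 1 else 0)" and "c \<in> I"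
  shows "x c - (\<Sum>d\<in>I. M c d * y d) = - (\<Sum>d\<in>I. M c d * (y d - (\<Sum>v\<in>I. L d v * x v)))"
proof -
  have "x c = (\<Sum>d\<in>I. M c d * (\<Sum>v\<in>I. L d v * x v))" by (rule sum_inverse_cancel[OF assms, symmetric])
  then show ?thesis by (simp add: algebra_simps sum_subtractf)
qed

lemma quasi_newton_step_contracts:
  fixes F :: "('a \<Rightarrow> real) \<Rightarrow> 'a \<Rightarrow> real" and L M :: "'a \<Rightarrow> 'a \<Rightarrow> real"
  assumes fin: "finite I"
    and left_inv: "\<forall>c\<in>I. \<forall>d\<in>I. (\<Sum>v\<in>I. M c v * L v d) = (if c = d then 1 else 0)"
    and lin: "\<And>d. d \<in> I \<Longrightarrow>
        \<bar>F p d - F q d - (\<Sum>v\<in>I. L d v * (p v - q v))\<bar> \<le> \<kappa> * (\<Sum>c\<in>I. \<bar>p c - q c\<bar>)"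
    and small_lin: "(\<Sum>c\<in>I. \<Sum>d\<in>I. \<bar>M c d\<bar>) * \<kappa> \<le> 1/2"
  shows "(\<Sum>c\<in>I. \<bar>(p c - (\<Sum>d\<in>I. M c d * (F p d - E d))) - (q c - (\<Sum>d\<in>I. M c d * (F q d - E d)))\<bar>)
      \<le> 1/2 * (\<Sum>c\<in>I. \<bar>p c - q c\<bar>)"
proof -
  define R where "R d = F p d - F q d - (\<Sum>v\<in>I. L d v * (p v - q v))" for d
  have "(p c - (\<Sum>d\<in>I. M c d * (F p d - E d))) - (q c - (\<Sum>d\<in>I. M c d * (F q d - E d)))
      = - (\<Sum>d\<in>I. M c d * R d)" if c: "c \<in> I" for c
  proof -
    have "(\<Sum>d\<in>I. M c d * (F p d - E d)) - (\<Sum>d\<in>I. M c d * (F q d - E d))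
        = (\<Sum>d\<in>I. M c d * (F p d - F q d))"
      by (simp add: sum_subtractf[symmetric] algebra_simps)
    then show ?thesis
      unfolding R_def
      using left_inverse_residual[OF fin left_inv c, of "\<lambda>v. p v - q v" "\<lambda>d. F p d - F q d"] by linarith
  qed
  then have "(\<Sum>c\<in>I. \<bar>(p c - (\<Sum>d\<in>I. M c d * (F p d - E d))) - (q c - (\<Sum>d\<in>I. M c d * (F q d - E d)))\<bar>)
      = (\<Sum>c\<in>I. \<bar>\<Sum>d\<in>I. M c d * R d\<bar>)"
    by (intro sum.cong) auto
  also have "\<dots> \<le> (\<Sum>c\<in>I. \<Sum>d\<in>I. \<bar>M c d\<bar>) * (\<kappa> * (\<Sum>c\<in>I. \<bar>p c - q c\<bar>))"
    by (rule sum_abs_matrix_mult_le) (use lin in \<open>simp add: R_def\<close>)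
  also have "\<dots> \<le> 1/2 * (\<Sum>c\<in>I. \<bar>p c - q c\<bar>)"
    using mult_right_mono[OF small_lin, of "\<Sum>c\<in>I. \<bar>p c - q c\<bar>"] by (simp add: mult.assoc sum_nonneg)
  finally show ?thesis .
qed

text \<open>The zero is the fixed point of the quasi-Newton map \<open>p \<mapsto> p - M (F p - E)\<close>, which
  contracts the \<open>\<ell>\<^sub>1\<close>-ball of radius \<open>r\<close> around \<open>z\<close>.\<close>

lemma quasi_newton_zero:
  fixes F :: "('a \<Rightarrow> real) \<Rightarrow> 'a \<Rightarrow> real" and L M :: "'a \<Rightarrow> 'a \<Rightarrow> real"
  assumes fin: "finite I" and r0: "0 \<le> r"
    and left_inv: "\<forall>c\<in>I. \<forall>d\<in>I. (\<Sum>v\<in>I. M c v * L v d) = (if c = d then 1 else 0)"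
    and right_inv: "\<forall>c\<in>I. \<forall>d\<in>I. (\<Sum>v\<in>I. L c v * M v d) = (if c = d then 1 else 0)"
    and lin: "\<And>p q d. (\<Sum>c\<in>I. \<bar>p c - z c\<bar>) \<le> r \<Longrightarrow> (\<Sum>c\<in>I. \<bar>q c - z c\<bar>) \<le> r \<Longrightarrow> d \<in> I \<Longrightarrow>
        \<bar>F p d - F q d - (\<Sum>v\<in>I. L d v * (p v - q v))\<bar> \<le> \<kappa> * (\<Sum>c\<in>I. \<bar>p c - q c\<bar>)"
    and start: "\<And>d. d \<in> I \<Longrightarrow> \<bar>F z d - E d\<bar> \<le> \<eta>"
    and small_lin: "(\<Sum>c\<in>I. \<Sum>d\<in>I. \<bar>M c d\<bar>) * \<kappa> \<le> 1/2"
    and small_start: "(\<Sum>c\<in>I. \<Sum>d\<in>I. \<bar>M c d\<bar>) * \<eta> \<le> r / 2"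
  shows "\<exists>p. (\<Sum>c\<in>I. \<bar>p c - z c\<bar>) \<le> r \<and> (\<forall>d\<in>I. F p d = E d)"
proof -
  define KB where "KB = (\<Sum>c\<in>I. \<Sum>d\<in>I. \<bar>M c d\<bar>)"
  define X where "X = {p. (\<Sum>c\<in>I. \<bar>p c - z c\<bar>) \<le> r \<and> (\<forall>c. c \<notin> I \<longrightarrow> p c = z c)}"
  define T where "T p = (\<lambda>c. if c \<in> I then p c - (\<Sum>d\<in>I. M c d * (F p d - E d)) else z c)"
    for p :: "'a \<Rightarrow> real"
  have zX: "z \<in> X" using r0 unfolding X_def by simp
  have contr: "\<forall>p\<in>X. \<forall>q\<in>X. (\<Sum>c\<in>I. \<bar>T p c - T q c\<bar>) \<le> 1/2 * (\<Sum>c\<in>I. \<bar>p c - q c\<bar>)"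
  proof (intro ballI)
    fix p q assume "p \<in> X" "q \<in> X"
    then have "(\<Sum>c\<in>I. \<bar>(p c - (\<Sum>d\<in>I. M c d * (F p d - E d))) - (q c - (\<Sum>d\<in>I. M c d * (F q d - E d)))\<bar>)
        \<le> 1/2 * (\<Sum>c\<in>I. \<bar>p c - q c\<bar>)"
      by (intro quasi_newton_step_contracts[OF fin left_inv _ small_lin] lin) (auto simp: X_def)
    then show "(\<Sum>c\<in>I. \<bar>T p c - T q c\<bar>) \<le> 1/2 * (\<Sum>c\<in>I. \<bar>p c - q c\<bar>)"
      by (simp add: T_def cong: sum.cong)
  qed
  have maps: "\<forall>p\<in>X. T p \<in> X"
  proof
    fix p assume p: "p \<in> X"
    have "(\<Sum>c\<in>I. \<bar>T p c - z c\<bar>) \<le> (\<Sum>c\<in>I. \<bar>T p c - T z c\<bar>) + (\<Sum>c\<in>I. \<bar>T z c - z c\<bar>)"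
      by (subst sum.distrib[symmetric]) (rule sum_mono, linarith)
    moreover have "(\<Sum>c\<in>I. \<bar>T p c - T z c\<bar>) \<le> 1/2 * (\<Sum>c\<in>I. \<bar>p c - z c\<bar>)"
      using contr p zX by blast
    moreover have "(\<Sum>c\<in>I. \<bar>T z c - z c\<bar>) \<le> KB * \<eta>"
    proof -
      have "(\<Sum>c\<in>I. \<bar>T z c - z c\<bar>) = (\<Sum>c\<in>I. \<bar>\<Sum>d\<in>I. M c d * (F z d - E d)\<bar>)"
        by (intro sum.cong) (auto simp: T_def)
      with sum_abs_matrix_mult_le[OF start, where M=M and I=I] show ?thesis unfolding KB_def by simp
    qed
    ultimately have "(\<Sum>c\<in>I. \<bar>T p c - z c\<bar>) \<le> r"
      using p small_start unfolding X_def KB_def by simp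
    then show "T p \<in> X" unfolding X_def T_def by simp
  qed
  obtain p where pX: "p \<in> X" and fixed: "T p = p"
    using contraction_fixpoint_l1[OF fin r0 X_def maps contr] by blast
  have "F p d = E d" if d: "d \<in> I" for d
  proof -
    have M_zero: "(\<Sum>d'\<in>I. M c d' * (F p d' - E d')) = 0" if "c \<in> I" for c
      using fun_cong[OF fixed, of c] that by (simp add: T_def)
    have "F p d - E d = (\<Sum>c\<in>I. L d c * (\<Sum>d'\<in>I. M c d' * (F p d' - E d')))"
      by (rule sum_inverse_cancel[OF fin right_inv d, symmetric])
    then show ?thesis using M_zero by simp
  qed
  then show ?thesis using pX unfolding X_def by blast
qed

section \<open>The characteristic function of a support\<close>

definition mono_prod :: "nat set \<Rightarrow> (nat \<Rightarrow> nat) \<Rightarrow> (nat \<times> nat \<Rightarrow> real) \<Rightarrow> real" where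
  "mono_prod J b p = (\<Prod>j\<in>J. p (j, b j))"

definition mono_prod_deriv :: "nat set \<Rightarrow> (nat \<Rightarrow> nat) \<Rightarrow> (nat \<times> nat \<Rightarrow> real) \<Rightarrow> nat \<times> nat \<Rightarrow> real" where
  "mono_prod_deriv J b p v = (if fst v \<in> J \<and> snd v = b (fst v) then (\<Prod>j\<in>J - {fst v}. p (j, b j)) else 0)"

definition fixed_profiles :: "nat \<Rightarrow> (nat \<Rightarrow> nat set) \<Rightarrow> nat \<Rightarrow> nat \<Rightarrow> (nat \<Rightarrow> nat) set" where
  "fixed_profiles n S i a = PiE {..<n} (\<lambda>j. if j = i then {a} else S j)"

definition upart_deriv :: "nat \<Rightarrow> (nat \<Rightarrow> nat set) \<Rightarrow> (nat \<Rightarrow> (nat \<Rightarrow> nat) \<Rightarrow> real)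
                     \<Rightarrow> nat \<Rightarrow> nat \<Rightarrow> (nat \<times> nat \<Rightarrow> real) \<Rightarrow> nat \<times> nat \<Rightarrow> real" where
  "upart_deriv n S w i a p v = (\<Sum>b\<in>fixed_profiles n S i a. w i b * mono_prod_deriv ({..<n} - {i}) b p v)"

definition charf_deriv :: "nat \<Rightarrow> (nat \<Rightarrow> nat set) \<Rightarrow> (nat \<Rightarrow> (nat \<Rightarrow> nat) \<Rightarrow> real)
                     \<Rightarrow> (nat \<times> nat \<Rightarrow> real) \<Rightarrow> nat \<times> nat \<Rightarrow> nat \<times> nat \<Rightarrow> real" where
  "charf_deriv n S w p c v = (case c of (i, k) \<Rightarrow>
     if k = ref_act S i then (if fst v = i \<and> snd v \<in> S i then 1 else 0)
     else upart_deriv n S w i (ref_act S i) p v - upart_deriv n S w i k p v)"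

lemma upart_eq_sum_mono_prod: "upart n S w i a p = (\<Sum>b\<in>fixed_profiles n S i a. w i b * mono_prod ({..<n} - {i}) b p)"
  unfolding upart_def fixed_profiles_def mono_prod_def ..

text \<open>Each variable occurs at most linearly in \<open>mono_prod\<close>, hence in \<open>upart\<close> and \<open>charf\<close>:
  updating one variable is an affine change, whose slope is the partial derivative.\<close>

lemma mono_prod_fun_upd:
  assumes "finite J"
  shows "mono_prod J b (p(v := t)) = mono_prod J b p + (t - p v) * mono_prod_deriv J b p v"
proof (cases "fst v \<in> J \<and> snd v = b (fst v)")
  case True
  define j0 where "j0 = fst v"
  have v: "v = (j0, b j0)" using True unfolding j0_def by (cases v) auto
  have J: "j0 \<in> J" using True unfolding j0_def by auto
  have "mono_prod J b (p(v := t)) = t * (\<Prod>j\<in>J - {j0}. (p(v := t)) (j, b j))"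
    unfolding mono_prod_def by (subst prod.remove[OF assms J]) (simp add: v)
  also have "(\<Prod>j\<in>J - {j0}. (p(v := t)) (j, b j)) = (\<Prod>j\<in>J - {j0}. p (j, b j))"
    by (rule prod.cong) (auto simp: v)
  finally have upd: "mono_prod J b (p(v := t)) = t * (\<Prod>j\<in>J - {j0}. p (j, b j))" .
  have "mono_prod J b p = p v * (\<Prod>j\<in>J - {j0}. p (j, b j))"
    unfolding mono_prod_def by (subst prod.remove[OF assms J]) (simp add: v)
  with upd show ?thesis using True unfolding mono_prod_deriv_def j0_def by (simp add: algebra_simps)
next
  case False
  have "mono_prod J b (p(v := t)) = mono_prod J b p"
    unfolding mono_prod_def by (rule prod.cong) (use False in auto)
  then show ?thesis using False unfolding mono_prod_deriv_def by auto
qed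

lemma upart_fun_upd:
  "upart n S w i a (p(v := t)) = upart n S w i a p + (t - p v) * upart_deriv n S w i a p v"
proof (cases "finite (fixed_profiles n S i a)")
  case True
  have "upart n S w i a (p(v := t)) = (\<Sum>b\<in>fixed_profiles n S i a. w i b * mono_prod ({..<n} - {i}) b p
       + (t - p v) * (w i b * mono_prod_deriv ({..<n} - {i}) b p v))"
    unfolding upart_eq_sum_mono_prod by (rule sum.cong) (auto simp: mono_prod_fun_upd algebra_simps)
  then show ?thesis unfolding upart_eq_sum_mono_prod upart_deriv_def by (simp add: sum.distrib sum_distrib_left)
next
  case False then show ?thesis unfolding upart_eq_sum_mono_prod upart_deriv_def by simp
qed

lemma charf_fun_upd:
  assumes "finite (S (fst c))"
  shows "charf n S w (p(v := t)) c = charf n S w p c + (t - p v) * charf_deriv n S w p c v"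
proof -
  obtain i k where c: "c = (i, k)" by (cases c)
  show ?thesis
  proof (cases "k = ref_act S i")
    case True
    have fin: "finite (S i)" using assms c by simp
    show ?thesis
    proof (cases "fst v = i \<and> snd v \<in> S i")
      case True2: True
      have v: "v = (i, snd v)" using True2 by (cases v) auto
      have "(\<Sum>l\<in>S i. (p(v := t)) (i, l)) = (\<Sum>l\<in>S i. p (i, l) + (if l = snd v then t - p v else 0))"
        by (rule sum.cong) (auto, (metis v)+)
      also have "\<dots> = (\<Sum>l\<in>S i. p (i, l)) + (t - p v)"
        using fin True2 by (simp add: sum.distrib)
      finally show ?thesis using True True2 c unfolding charf_def charf_deriv_def by simp
    next
      case False
      have "(\<Sum>l\<in>S i. (p(v := t)) (i, l)) = (\<Sum>l\<in>S i. p (i, l))"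
        by (rule sum.cong) (use False in auto)
      then show ?thesis using True False c unfolding charf_def charf_deriv_def by auto
    qed
  next
    case False
    then show ?thesis using c unfolding charf_def charf_deriv_def by (simp add: upart_fun_upd algebra_simps)
  qed
qed

lemma deriv_charf:
  assumes "finite (S (fst c))"
  shows "deriv (\<lambda>t. charf n S w (p(v := t)) c) (p v) = charf_deriv n S w p c v"
proof -
  have "((\<lambda>t. charf n S w p c + (t - p v) * charf_deriv n S w p c v) has_real_derivative charf_deriv n S w p c v) (at (p v))"
    by (auto intro!: derivative_eq_intros)
  then have "((\<lambda>t. charf n S w (p(v := t)) c) has_real_derivative charf_deriv n S w p c v) (at (p v))"
    using charf_fun_upd[of S c n w p v] assms by simp
  then show ?thesis by (rule DERIV_imp_deriv)
qed

lemma sum_mono_prod_deriv: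
  assumes "finite I" "finite J" "\<forall>j\<in>J. (j, b j) \<in> I"
  shows "(\<Sum>v\<in>I. h v * mono_prod_deriv J b q v) = (\<Sum>j\<in>J. h (j, b j) * (\<Prod>k\<in>J - {j}. q (k, b k)))"
proof -
  let ?g = "\<lambda>j. (j, b j)"
  have "(\<Sum>v\<in>I. h v * mono_prod_deriv J b q v) = (\<Sum>v\<in>?g ` J. h v * mono_prod_deriv J b q v)"
    by (rule sum.mono_neutral_right) (use assms in \<open>auto simp: mono_prod_deriv_def\<close>)
  also have "\<dots> = (\<Sum>j\<in>J. h (j, b j) * mono_prod_deriv J b q (j, b j))"
    by (subst sum.reindex) (auto simp: inj_on_def)
  also have "\<dots> = (\<Sum>j\<in>J. h (j, b j) * (\<Prod>k\<in>J - {j}. q (k, b k)))"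
    by (rule sum.cong) (auto simp: mono_prod_deriv_def)
  finally show ?thesis .
qed

definition utility_norm :: "nat \<Rightarrow> (nat \<Rightarrow> nat) \<Rightarrow> (nat \<Rightarrow> (nat \<Rightarrow> nat) \<Rightarrow> real) \<Rightarrow> real" where
  "utility_norm n N w = (\<Sum>i<n. \<Sum>a\<in>profiles n N. \<bar>w i a\<bar>)"

lemma finite_profiles: "finite (profiles n N)"
  unfolding profiles_def by (rule finite_PiE) auto

locale support_game =
  fixes n :: nat and N :: "nat \<Rightarrow> nat" and S :: "nat \<Rightarrow> nat set"
  assumes S_sub: "\<And>i. i < n \<Longrightarrow> S i \<subseteq> {..<N i}" and S_fin: "\<And>i. finite (S i)"
begin

abbreviation "I \<equiv> var_idx n S"

lemma finite_var_idx: "finite I"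
proof -
  have "I \<subseteq> Sigma {..<n} S" unfolding var_idx_def by auto
  then show ?thesis by (rule finite_subset) (auto intro: S_fin)
qed

lemma fixed_profiles_var_idx: "b \<in> fixed_profiles n S i a \<Longrightarrow> j \<in> {..<n} - {i} \<Longrightarrow> (j, b j) \<in> I"
proof -
  assume b: "b \<in> fixed_profiles n S i a" and j: "j \<in> {..<n} - {i}"
  have "b j \<in> (if j = i then {a} else S j)" using PiE_mem[OF b[unfolded fixed_profiles_def]] j by blast
  then have "b j \<in> S j" using j by simp
  then show ?thesis using j unfolding var_idx_def by simp
qed

lemma fixed_profiles_subset_profiles: "i < n \<Longrightarrow> a < N i \<Longrightarrow> fixed_profiles n S i a \<subseteq> profiles n N"
  unfolding fixed_profiles_def profiles_def
proof (rule PiE_mono)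
  fix j assume "i < n" "a < N i" "j \<in> {..<n}"
  then show "(if j = i then {a} else S j) \<subseteq> {..<N j}" using S_sub[of j] by auto
qed

lemma sum_upart_deriv:
  "(\<Sum>v\<in>I. h v * upart_deriv n S w i a q v) =
   (\<Sum>b\<in>fixed_profiles n S i a. w i b * (\<Sum>j\<in>{..<n} - {i}. h (j, b j) * (\<Prod>k\<in>{..<n} - {i} - {j}. q (k, b k))))"
  (is "_ = ?R")
proof -
  have "(\<Sum>v\<in>I. h v * upart_deriv n S w i a q v) = (\<Sum>b\<in>fixed_profiles n S i a. w i b * (\<Sum>v\<in>I. h v * mono_prod_deriv ({..<n} - {i}) b q v))"
  proof -
    have "(\<Sum>v\<in>I. h v * upart_deriv n S w i a q v) = (\<Sum>v\<in>I. \<Sum>b\<in>fixed_profiles n S i a. w i b * (h v * mono_prod_deriv ({..<n} - {i}) b q v))"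
      unfolding upart_deriv_def sum_distrib_left by (rule sum.cong[OF refl], rule sum.cong[OF refl]) (simp only: mult.left_commute)
    also have "\<dots> = (\<Sum>b\<in>fixed_profiles n S i a. \<Sum>v\<in>I. w i b * (h v * mono_prod_deriv ({..<n} - {i}) b q v))"
      by (rule sum.swap)
    finally show ?thesis by (simp only: sum_distrib_left)
  qed
  also have "\<dots> = ?R"
    by (intro sum.cong refl arg_cong2[where f="(*)"] sum_mono_prod_deriv finite_var_idx) (auto intro: fixed_profiles_var_idx)
  finally show ?thesis by simp
qed

lemma card_others_le: "card ({..<n} - {i}) \<le> n"
  by (metis card_Diff1_le card_lessThan finite_lessThan)

lemma abs_sum_fixed_profiles_le:
  assumes "i < n" "a < N i" "0 \<le> C" "\<And>b. b \<in> fixed_profiles n S i a \<Longrightarrow> \<bar>X b\<bar> \<le> C"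
  shows "\<bar>\<Sum>b\<in>fixed_profiles n S i a. w i b * X b\<bar> \<le> utility_norm n N w * C"
proof -
  have "(\<Sum>b\<in>fixed_profiles n S i a. \<bar>w i b\<bar>) \<le> (\<Sum>b\<in>profiles n N. \<bar>w i b\<bar>)"
    by (rule sum_mono2[OF finite_profiles fixed_profiles_subset_profiles[OF assms(1,2)]]) simp
  also have "\<dots> \<le> utility_norm n N w"
    unfolding utility_norm_def
    by (rule member_le_sum[where f="\<lambda>i. \<Sum>b\<in>profiles n N. \<bar>w i b\<bar>"]) (use assms in \<open>auto intro: sum_nonneg\<close>)
  finally have "(\<Sum>b\<in>fixed_profiles n S i a. \<bar>w i b\<bar>) * C \<le> utility_norm n N w * C"
    using assms(3) by (rule mult_right_mono)
  with sum_abs_mult_le[of "fixed_profiles n S i a" X C "w i", OF assms(4)] show ?thesis by simp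
qed

lemma upart_linearization_error_le:
  assumes i: "i < n" "a < N i" and r0: "0 \<le> r" and d0: "0 \<le> d"
    and box: "\<forall>v\<in>I. \<bar>p v\<bar> \<le> 2 \<and> \<bar>q v\<bar> \<le> 2 \<and> \<bar>p0 v\<bar> \<le> 2 \<and>
      \<bar>p v - p0 v\<bar> \<le> r \<and> \<bar>q v - p0 v\<bar> \<le> r \<and> \<bar>p v - q v\<bar> \<le> d"
  shows "\<bar>upart n S w i a p - upart n S w i a q - (\<Sum>v\<in>I. (p v - q v) * upart_deriv n S w i a p0 v)\<bar>
     \<le> utility_norm n N w * (2 * real n ^ 2 * 2 ^ n * r * d)"
proof -
  let ?J = "{..<n} - {i}"
  have eq: "upart n S w i a p - upart n S w i a q - (\<Sum>v\<in>I. (p v - q v) * upart_deriv n S w i a p0 v)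
     = (\<Sum>b\<in>fixed_profiles n S i a. w i b * (mono_prod ?J b p - mono_prod ?J b q -
          (\<Sum>j\<in>?J. (p (j, b j) - q (j, b j)) * (\<Prod>k\<in>?J - {j}. p0 (k, b k)))))"
    unfolding upart_eq_sum_mono_prod sum_upart_deriv sum_subtractf[symmetric]
    by (rule sum.cong) (simp_all add: right_diff_distrib)
  show ?thesis unfolding eq
  proof (rule abs_sum_fixed_profiles_le[OF i])
    fix b assume b: "b \<in> fixed_profiles n S i a"
    have "\<forall>j\<in>?J. (j, b j) \<in> I" using fixed_profiles_var_idx[OF b] by blast
    then have "\<bar>mono_prod ?J b p - mono_prod ?J b q - (\<Sum>j\<in>?J. (p (j, b j) - q (j, b j)) * (\<Prod>k\<in>?J - {j}. p0 (k, b k)))\<bar>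
       \<le> 2 * real (card ?J)^2 * 2 ^ card ?J * r * d"
      unfolding mono_prod_def using box
      by (intro prod_linearization_error_le[where a="\<lambda>j. p (j, b j)" and b="\<lambda>j. q (j, b j)"
            and c="\<lambda>j. p0 (j, b j)", simplified]) auto
    also have "\<dots> \<le> 2 * real n ^ 2 * 2 ^ n * r * d"
      using card_others_le[of i] r0 d0
      by (intro mult_right_mono mult_left_mono mult_mono power_mono power_increasing) auto
    finally show "\<bar>mono_prod ?J b p - mono_prod ?J b q
        - (\<Sum>j\<in>?J. (p (j, b j) - q (j, b j)) * (\<Prod>k\<in>?J - {j}. p0 (k, b k)))\<bar>
      \<le> 2 * real n ^ 2 * 2 ^ n * r * d" .
  qed (use r0 d0 in simp)
qed

lemma upart_lipschitz:
  assumes i: "i < n" "a < N i" and d0: "0 \<le> d"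
    and box: "\<forall>v\<in>I. \<bar>p v\<bar> \<le> 2 \<and> \<bar>q v\<bar> \<le> 2 \<and> \<bar>p v - q v\<bar> \<le> d"
  shows "\<bar>upart n S w i a p - upart n S w i a q\<bar> \<le> utility_norm n N w * (real n * 2 ^ n * d)"
proof -
  let ?J = "{..<n} - {i}"
  have eq: "upart n S w i a p - upart n S w i a q
      = (\<Sum>b\<in>fixed_profiles n S i a. w i b * (mono_prod ?J b p - mono_prod ?J b q))"
    unfolding upart_eq_sum_mono_prod by (simp add: sum_subtractf algebra_simps)
  show ?thesis unfolding eq
  proof (rule abs_sum_fixed_profiles_le[OF i])
    fix b assume b: "b \<in> fixed_profiles n S i a"
    have "\<forall>j\<in>?J. (j, b j) \<in> I" using fixed_profiles_var_idx[OF b] by blast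
    then have "\<bar>mono_prod ?J b p - mono_prod ?J b q\<bar> \<le> real (card ?J) * 2 ^ card ?J * d"
      unfolding mono_prod_def using box
      by (intro prod_diff_abs_le[where a="\<lambda>j. p (j, b j)" and b="\<lambda>j. q (j, b j)", simplified]) auto
    also have "\<dots> \<le> real n * 2 ^ n * d"
      using card_others_le[of i] d0 by (intro mult_right_mono mult_mono power_increasing) auto
    finally show "\<bar>mono_prod ?J b p - mono_prod ?J b q\<bar> \<le> real n * 2 ^ n * d" .
  qed (use d0 in simp)
qed

lemma upart_abs_le:
  assumes i: "i < n" "a < N i" and box: "\<forall>v\<in>I. \<bar>p v\<bar> \<le> 2"
  shows "\<bar>upart n S w i a p\<bar> \<le> utility_norm n N w * 2 ^ n"
  unfolding upart_eq_sum_mono_prod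
proof (rule abs_sum_fixed_profiles_le[OF i])
  fix b assume b: "b \<in> fixed_profiles n S i a"
  have "\<forall>j\<in>{..<n} - {i}. (j, b j) \<in> I" using fixed_profiles_var_idx[OF b] by blast
  then have "\<bar>mono_prod ({..<n} - {i}) b p\<bar> \<le> 2 ^ card ({..<n} - {i})"
    unfolding mono_prod_def using box by (intro prod_abs_le_power) auto
  also have "\<dots> \<le> 2 ^ n" using card_others_le by (intro power_increasing) auto
  finally show "\<bar>mono_prod ({..<n} - {i}) b p\<bar> \<le> 2 ^ n" .
qed simp

lemma upart_diff: "upart n S (\<lambda>i b. w1 i b - w2 i b) i a p = upart n S w1 i a p - upart n S w2 i a p"
  unfolding upart_eq_sum_mono_prod by (simp add: sum_subtractf algebra_simps)

lemma fixed_profiles_eq_action_slice: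
  assumes i: "i < n" and k: "k \<in> A"
  shows "fixed_profiles n S i k = {x \<in> PiE {..<n} (\<lambda>j. if j = i then A else S j). x i = k}"
proof (rule equalityI; rule subsetI)
  fix x assume x: "x \<in> fixed_profiles n S i k"
  have "x \<in> PiE {..<n} (\<lambda>j. if j = i then A else S j)"
    using k by (intro subsetD[OF PiE_mono x[unfolded fixed_profiles_def]]) auto
  moreover have "x i = k" using PiE_mem[OF x[unfolded fixed_profiles_def], of i] i by simp
  ultimately show "x \<in> {x \<in> PiE {..<n} (\<lambda>j. if j = i then A else S j). x i = k}" by simp
next
  fix x assume "x \<in> {x \<in> PiE {..<n} (\<lambda>j. if j = i then A else S j). x i = k}"
  then have x: "x \<in> PiE {..<n} (\<lambda>j. if j = i then A else S j)" "x i = k" by auto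
  show "x \<in> fixed_profiles n S i k" unfolding fixed_profiles_def PiE_iff
  proof (intro conjI ballI)
    show "x j \<in> (if j = i then {k} else S j)" if "j \<in> {..<n}" for j
      using PiE_mem[OF x(1) that] x(2) by (cases "j = i") auto
    show "x \<in> extensional {..<n}" using x(1) by (simp add: PiE_iff)
  qed
qed

lemma eu_fun_upd:
  assumes i: "i < n" and zero: "\<forall>j<n. j \<noteq> i \<longrightarrow> (\<forall>l<N j. l \<notin> S j \<longrightarrow> \<rho> j l = 0)"
  shows "eu n N w i (\<rho>(i := \<tau>)) = (\<Sum>k<N i. \<tau> k * upart n S w i k (\<lambda>(j, l). \<rho> j l))"
proof -
  let ?J = "{..<n} - {i}"
  define Q where "Q = PiE {..<n} (\<lambda>j. if j = i then {..<N i} else S j)"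
  have Qsub: "Q \<subseteq> profiles n N" unfolding Q_def profiles_def
  proof (rule PiE_mono)
    fix j assume "j \<in> {..<n}" then show "(if j = i then {..<N i} else S j) \<subseteq> {..<N j}" using S_sub[of j] by auto
  qed
  have finQ: "finite Q" unfolding Q_def by (rule finite_PiE) (auto intro: S_fin)
  have prodsplit: "(\<Prod>j<n. (\<rho>(i := \<tau>)) j (a j)) = \<tau> (a i) * (\<Prod>j\<in>?J. \<rho> j (a j))" for a
  proof -
    have "(\<Prod>j<n. (\<rho>(i := \<tau>)) j (a j)) = (\<rho>(i := \<tau>)) i (a i) * (\<Prod>j\<in>?J. (\<rho>(i := \<tau>)) j (a j))"
      by (rule prod.remove) (use i in auto)
    also have "(\<Prod>j\<in>?J. (\<rho>(i := \<tau>)) j (a j)) = (\<Prod>j\<in>?J. \<rho> j (a j))"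
      by (rule prod.cong) auto
    finally show ?thesis by simp
  qed
  have "eu n N w i (\<rho>(i := \<tau>)) = (\<Sum>a\<in>profiles n N. w i a * (\<tau> (a i) * (\<Prod>j\<in>?J. \<rho> j (a j))))"
    unfolding eu_def prodsplit ..
  also have "\<dots> = (\<Sum>a\<in>Q. w i a * (\<tau> (a i) * (\<Prod>j\<in>?J. \<rho> j (a j))))"
  proof (rule sum.mono_neutral_right[OF finite_profiles Qsub])
    show "\<forall>a\<in>profiles n N - Q. w i a * (\<tau> (a i) * (\<Prod>j\<in>?J. \<rho> j (a j))) = 0"
    proof
      fix a assume a: "a \<in> profiles n N - Q"
      then have ap: "\<forall>j<n. a j < N j" unfolding profiles_def by (auto simp: PiE_iff)
      have ae: "a \<in> extensional {..<n}" using a unfolding profiles_def by (auto simp: PiE_iff)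
      obtain j where j: "j < n" "a j \<notin> (if j = i then {..<N i} else S j)"
        using a ae unfolding Q_def by (auto simp: PiE_iff)
      then have ji: "j \<noteq> i" using ap by auto
      then have "\<rho> j (a j) = 0" using zero j ap by auto
      then have "(\<Prod>j\<in>?J. \<rho> j (a j)) = 0" using j ji by (intro prod_zero) auto
      then show "w i a * (\<tau> (a i) * (\<Prod>j\<in>?J. \<rho> j (a j))) = 0" by simp
    qed
  qed
  also have "\<dots> = (\<Sum>k<N i. \<Sum>a\<in>{x. x \<in> Q \<and> x i = k}. w i a * (\<tau> (a i) * (\<Prod>j\<in>?J. \<rho> j (a j))))"
  proof (rule sum.group[symmetric, OF finQ])
    show "(\<lambda>x. x i) ` Q \<subseteq> {..<N i}"
    proof
      fix y assume "y \<in> (\<lambda>x. x i) ` Q"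
      then obtain x where x: "x \<in> Q" "y = x i" by blast
      have "x i \<in> (if i = i then {..<N i} else S i)" using PiE_mem[OF x(1)[unfolded Q_def]] i by blast
      then show "y \<in> {..<N i}" using x by simp
    qed
  qed simp
  also have "\<dots> = (\<Sum>k<N i. \<tau> k * upart n S w i k (\<lambda>(j, l). \<rho> j l))"
  proof (rule sum.cong[OF refl])
    fix k assume k: "k \<in> {..<N i}"
    have PBi: "x i = k" if "x \<in> fixed_profiles n S i k" for x
      using PiE_mem[OF that[unfolded fixed_profiles_def], of i] i by simp
    have set: "{x. x \<in> Q \<and> x i = k} = fixed_profiles n S i k"
      unfolding Q_def using i k by (intro fixed_profiles_eq_action_slice[symmetric]) auto
    show "(\<Sum>a\<in>{x. x \<in> Q \<and> x i = k}. w i a * (\<tau> (a i) * (\<Prod>j\<in>?J. \<rho> j (a j)))) = \<tau> k * upart n S w i k (\<lambda>(j, l). \<rho> j l)"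
      unfolding set upart_eq_sum_mono_prod mono_prod_def sum_distrib_left
      by (rule sum.cong[OF refl]) (simp add: PBi)
  qed
  finally show ?thesis .
qed

lemma upart_cong:
  assumes "\<forall>v\<in>I. p v = q v"
  shows "upart n S w i a p = upart n S w i a q"
  unfolding upart_eq_sum_mono_prod mono_prod_def
  by (rule sum.cong[OF refl], rule arg_cong[where f="\<lambda>x. _ * x"], rule prod.cong[OF refl])
     (use assms fixed_profiles_var_idx in blast)

lemma sum_indicator_player:
  assumes i: "i < n"
  shows "(\<Sum>v\<in>I. (h v::real) * (if fst v = i \<and> snd v \<in> S i then 1 else 0)) = (\<Sum>l\<in>S i. h (i, l))"
proof -
  have "(\<Sum>v\<in>I. h v * (if fst v = i \<and> snd v \<in> S i then 1 else 0)) = (\<Sum>v\<in>I. if fst v = i \<and> snd v \<in> S i then h v else 0)"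
    by (rule sum.cong) auto
  also have "\<dots> = (\<Sum>v\<in>{v\<in>I. fst v = i \<and> snd v \<in> S i}. h v)"
    by (rule sum.inter_filter[OF finite_var_idx, symmetric])
  also have "{v\<in>I. fst v = i \<and> snd v \<in> S i} = (\<lambda>l. (i, l)) ` S i"
    using i unfolding var_idx_def by auto
  also have "(\<Sum>v\<in>(\<lambda>l. (i, l)) ` S i. h v) = (\<Sum>l\<in>S i. h (i, l))"
    by (subst sum.reindex) (auto simp: inj_on_def)
  finally show ?thesis .
qed

lemma ref_act_in: "S i \<noteq> {} \<Longrightarrow> ref_act S i \<in> S i"
  unfolding ref_act_def using S_fin by (rule Min_in)

lemma utility_norm_nonneg: "0 \<le> utility_norm n N w"
  unfolding utility_norm_def by (auto intro: sum_nonneg)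

lemma charf_linearization_error_le:
  assumes c: "c \<in> I" and r0: "0 \<le> r" and d0: "0 \<le> d"
    and box: "\<forall>v\<in>I. \<bar>p v\<bar> \<le> 2 \<and> \<bar>q v\<bar> \<le> 2 \<and> \<bar>p0 v\<bar> \<le> 2 \<and>
      \<bar>p v - p0 v\<bar> \<le> r \<and> \<bar>q v - p0 v\<bar> \<le> r \<and> \<bar>p v - q v\<bar> \<le> d"
  shows "\<bar>charf n S u' p c - charf n S u' q c - (\<Sum>v\<in>I. (p v - q v) * charf_deriv n S u p0 c v)\<bar>
    \<le> 2 * utility_norm n N u * (2 * real n ^ 2 * 2 ^ n * r * d)
      + 2 * utility_norm n N (\<lambda>i b. u' i b - u i b) * (real n * 2 ^ n * d)"
proof -
  define D where "D = (\<lambda>i b. u' i b - u i b)"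
  obtain i k where ck: "c = (i, k)" "i < n" "k \<in> S i" using c unfolding var_idx_def by auto
  show ?thesis
  proof (cases "k = ref_act S i")
    case True
    have "charf n S u' p c - charf n S u' q c = (\<Sum>l\<in>S i. p (i, l) - q (i, l))"
      unfolding charf_def ck using True by (simp add: sum_subtractf)
    moreover have "(\<Sum>v\<in>I. (p v - q v) * charf_deriv n S u p0 c v) = (\<Sum>l\<in>S i. p (i, l) - q (i, l))"
      unfolding charf_deriv_def ck using True sum_indicator_player[OF ck(2), of "\<lambda>v. p v - q v"] by simp
    ultimately show ?thesis using r0 d0 by (simp add: utility_norm_nonneg)
  next
    case False
    define a1 where "a1 = ref_act S i"
    have a1: "a1 < N i" using ref_act_in[of i] ck S_sub unfolding a1_def by auto
    have k: "k < N i" using ck S_sub by auto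
    define lin_err where "lin_err a = upart n S u i a p - upart n S u i a q
        - (\<Sum>v\<in>I. (p v - q v) * upart_deriv n S u i a p0 v)" for a
    define pert where "pert a = upart n S D i a p - upart n S D i a q" for a
    have expr: "charf n S u' p c - charf n S u' q c - (\<Sum>v\<in>I. (p v - q v) * charf_deriv n S u p0 c v)
       = (lin_err a1 + pert a1) - (lin_err k + pert k)"
    proof -
      have "(\<Sum>v\<in>I. (p v - q v) * charf_deriv n S u p0 c v)
          = (\<Sum>v\<in>I. (p v - q v) * upart_deriv n S u i a1 p0 v) - (\<Sum>v\<in>I. (p v - q v) * upart_deriv n S u i k p0 v)"
        unfolding charf_deriv_def ck a1_def using False by (simp add: sum_subtractf right_diff_distrib)
      moreover have "upart n S u' i a x = upart n S u i a x + upart n S D i a x" for a x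
        unfolding D_def upart_diff by simp
      ultimately show ?thesis
        unfolding charf_def ck lin_err_def pert_def a1_def[symmetric] using False a1_def by simp
    qed
    have lin_err_le: "\<bar>lin_err a\<bar> \<le> utility_norm n N u * (2 * real n ^ 2 * 2 ^ n * r * d)" if "a < N i" for a
      unfolding lin_err_def using ck(2) that r0 d0 box by (rule upart_linearization_error_le)
    have pert_le: "\<bar>pert a\<bar> \<le> utility_norm n N D * (real n * 2 ^ n * d)" if "a < N i" for a
      unfolding pert_def using ck(2) that d0 box by (intro upart_lipschitz) auto
    show ?thesis
      using lin_err_le[OF a1] lin_err_le[OF k] pert_le[OF a1] pert_le[OF k]
      unfolding expr D_def[symmetric] by (simp add: abs_le_iff; linarith)
  qed
qed

lemma charf_perturbation_le:
  assumes c: "c \<in> I" and box: "\<forall>v\<in>I. \<bar>p v\<bar> \<le> 2"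
  shows "\<bar>charf n S u' p c - charf n S u p c\<bar> \<le> 2 * utility_norm n N (\<lambda>i b. u' i b - u i b) * 2 ^ n"
proof -
  define D where "D = (\<lambda>i b. u' i b - u i b)"
  obtain i k where ck: "c = (i, k)" "i < n" "k \<in> S i" using c unfolding var_idx_def by auto
  show ?thesis
  proof (cases "k = ref_act S i")
    case True
    then show ?thesis unfolding charf_def ck by (simp add: utility_norm_nonneg)
  next
    case False
    have a1: "ref_act S i < N i" using ref_act_in[of i] ck S_sub by auto
    have k: "k < N i" using ck S_sub by auto
    have expr: "charf n S u' p c - charf n S u p c = upart n S D i (ref_act S i) p - upart n S D i k p"
      unfolding charf_def ck D_def upart_diff using False by simp
    have bound: "\<bar>upart n S D i a p\<bar> \<le> utility_norm n N D * 2 ^ n" if "a < N i" for a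
      using ck(2) that box by (rule upart_abs_le)
    show ?thesis
      using expr bound[OF a1] bound[OF k] unfolding D_def[symmetric] by (simp add: abs_le_iff; linarith)
  qed
qed

lemma upart_near:
  assumes p0: "\<forall>v\<in>I. \<bar>p0 v\<bar> \<le> 1" and \<eta>: "0 < \<eta>"
  shows "\<exists>r>0. \<forall>u' p. utility_norm n N (\<lambda>i b. u' i b - u i b) \<le> r \<longrightarrow> (\<forall>v\<in>I. \<bar>p v - p0 v\<bar> \<le> r) \<longrightarrow>
           (\<forall>i<n. \<forall>a<N i. \<bar>upart n S u' i a p - upart n S u i a p0\<bar> \<le> \<eta>)"
proof -
  define K where "K = 2 ^ n + utility_norm n N u * (real n * 2 ^ n)"
  have K0: "0 \<le> K" unfolding K_def by (simp add: utility_norm_nonneg)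
  define r where "r = min 1 (\<eta> / (K + 1))"
  have r0: "0 < r" and r1: "r \<le> 1" unfolding r_def using \<eta> K0 by auto
  have Kr: "K * r \<le> \<eta>"
  proof -
    have "K * r \<le> K * (\<eta> / (K + 1))" unfolding r_def using K0 by (intro mult_left_mono) auto
    also have "\<dots> \<le> \<eta>" using \<eta> K0 by (simp add: field_simps)
    finally show ?thesis .
  qed
  show ?thesis
  proof (intro exI[of _ r] conjI allI impI r0)
    fix u' p i a
    assume D: "utility_norm n N (\<lambda>i b. u' i b - u i b) \<le> r" and box: "\<forall>v\<in>I. \<bar>p v - p0 v\<bar> \<le> r"
      and i: "i < n" and a: "a < N i"
    have box2: "\<forall>v\<in>I. \<bar>p v\<bar> \<le> 2 \<and> \<bar>p0 v\<bar> \<le> 2 \<and> \<bar>p v - p0 v\<bar> \<le> r"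
    proof
      fix v assume "v \<in> I"
      then have "\<bar>p v - p0 v\<bar> \<le> r" "\<bar>p0 v\<bar> \<le> 1" using box p0 by auto
      then show "\<bar>p v\<bar> \<le> 2 \<and> \<bar>p0 v\<bar> \<le> 2 \<and> \<bar>p v - p0 v\<bar> \<le> r" using r1 by (auto simp: abs_le_iff)
    qed
    have "\<bar>upart n S (\<lambda>i b. u' i b - u i b) i a p\<bar> \<le> utility_norm n N (\<lambda>i b. u' i b - u i b) * 2 ^ n"
      using i a box2 by (intro upart_abs_le) auto
    also have "\<dots> \<le> r * 2 ^ n" using D by simp
    finally have pert: "\<bar>upart n S (\<lambda>i b. u' i b - u i b) i a p\<bar> \<le> r * 2 ^ n" .
    have lip: "\<bar>upart n S u i a p - upart n S u i a p0\<bar> \<le> utility_norm n N u * (real n * 2 ^ n * r)"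
      using i a r0 box2 by (intro upart_lipschitz) auto
    have "upart n S u' i a p = upart n S u i a p + upart n S (\<lambda>i b. u' i b - u i b) i a p"
      by (simp add: upart_diff)
    then have "\<bar>upart n S u' i a p - upart n S u i a p0\<bar> \<le> K * r"
      using pert lip unfolding K_def by (simp add: abs_le_iff algebra_simps; linarith)
    then show "\<bar>upart n S u' i a p - upart n S u i a p0\<bar> \<le> \<eta>" using Kr by linarith
  qed
qed

lemma charf_quasi_linear:
  assumes p0: "\<forall>v\<in>I. \<bar>p0 v\<bar> \<le> 1" and r: "0 \<le> r" "r \<le> 1"
    and D: "utility_norm n N (\<lambda>i b. u' i b - u i b) \<le> r"
    and p: "(\<Sum>c\<in>I. \<bar>p c - p0 c\<bar>) \<le> r" and q: "(\<Sum>c\<in>I. \<bar>q c - p0 c\<bar>) \<le> r" and d: "d \<in> I"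
  shows "\<bar>charf n S u' p d - charf n S u' q d - (\<Sum>v\<in>I. charf_deriv n S u p0 d v * (p v - q v))\<bar>
     \<le> (2 * utility_norm n N u * (2 * real n ^ 2 * 2 ^ n) + 2 * (real n * 2 ^ n)) * r * (\<Sum>c\<in>I. \<bar>p c - q c\<bar>)"
proof -
  define dd where "dd = (\<Sum>c\<in>I. \<bar>p c - q c\<bar>)"
  have coord: "\<bar>f v\<bar> \<le> (\<Sum>c\<in>I. \<bar>f c\<bar>)" if "v \<in> I" for f :: "nat \<times> nat \<Rightarrow> real" and v
    using that by (intro member_le_sum) (auto simp: finite_var_idx)
  have dd0: "0 \<le> dd" unfolding dd_def by (auto intro: sum_nonneg)
  have "\<forall>v\<in>I. \<bar>p v\<bar> \<le> 2 \<and> \<bar>q v\<bar> \<le> 2 \<and> \<bar>p0 v\<bar> \<le> 2 \<and>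
      \<bar>p v - p0 v\<bar> \<le> r \<and> \<bar>q v - p0 v\<bar> \<le> r \<and> \<bar>p v - q v\<bar> \<le> dd"
  proof
    fix v assume v: "v \<in> I"
    have "\<bar>p v - p0 v\<bar> \<le> r" "\<bar>q v - p0 v\<bar> \<le> r" "\<bar>p v - q v\<bar> \<le> dd"
      using coord[OF v, of "\<lambda>c. p c - p0 c"] coord[OF v, of "\<lambda>c. q c - p0 c"]
        coord[OF v, of "\<lambda>c. p c - q c"] p q unfolding dd_def by auto
    then show "\<bar>p v\<bar> \<le> 2 \<and> \<bar>q v\<bar> \<le> 2 \<and> \<bar>p0 v\<bar> \<le> 2 \<and>
        \<bar>p v - p0 v\<bar> \<le> r \<and> \<bar>q v - p0 v\<bar> \<le> r \<and> \<bar>p v - q v\<bar> \<le> dd"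
      using p0 v r by (auto simp: abs_le_iff)
  qed
  then have "\<bar>charf n S u' p d - charf n S u' q d - (\<Sum>v\<in>I. (p v - q v) * charf_deriv n S u p0 d v)\<bar>
      \<le> 2 * utility_norm n N u * (2 * real n ^ 2 * 2 ^ n * r * dd)
        + 2 * utility_norm n N (\<lambda>i b. u' i b - u i b) * (real n * 2 ^ n * dd)"
    using d r dd0 by (intro charf_linearization_error_le) auto
  also have "\<dots> \<le> 2 * utility_norm n N u * (2 * real n ^ 2 * 2 ^ n * r * dd) + 2 * r * (real n * 2 ^ n * dd)"
    using D dd0 by (intro add_left_mono mult_right_mono mult_left_mono) auto
  also have "\<dots> = (2 * utility_norm n N u * (2 * real n ^ 2 * 2 ^ n) + 2 * (real n * 2 ^ n)) * r * dd"
    by (simp add: algebra_simps)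
  finally show ?thesis unfolding dd_def by (simp add: mult.commute)
qed

lemma charf_zero_near:
  assumes det: "det_on I (charf_deriv n S u p0) \<noteq> 0" and p0: "\<forall>v\<in>I. \<bar>p0 v\<bar> \<le> 1" and r: "0 < r"
  shows "\<exists>\<delta>>0. \<forall>u'. utility_norm n N (\<lambda>i b. u' i b - u i b) \<le> \<delta> \<longrightarrow>
           (\<exists>p. (\<forall>v\<in>I. \<bar>p v - p0 v\<bar> \<le> r) \<and> (\<forall>d\<in>I. charf n S u' p d = charf n S u p0 d))"
proof -
  let ?L = "charf_deriv n S u p0"
  obtain M where
    right_inv: "\<forall>c\<in>I. \<forall>d\<in>I. (\<Sum>v\<in>I. ?L c v * M v d) = (if c = d then 1 else 0)" and
    left_inv: "\<forall>c\<in>I. \<forall>d\<in>I. (\<Sum>v\<in>I. M c v * ?L v d) = (if c = d then 1 else 0)"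
    using det_on_nonzero_imp_inverse[OF finite_var_idx det] by blast
  define KB where "KB = (\<Sum>c\<in>I. \<Sum>d\<in>I. \<bar>M c d\<bar>)"
  define K1 where "K1 = 2 * utility_norm n N u * (2 * real n ^ 2 * 2 ^ n) + 2 * (real n * 2 ^ n)"
  define K0 :: real where "K0 = 2 * 2 ^ n"
  define Q where "Q = KB * (K1 + K0) + 1"
  have KB0: "0 \<le> KB" unfolding KB_def by (auto intro: sum_nonneg)
  have K10: "0 \<le> K1" unfolding K1_def by (simp add: utility_norm_nonneg)
  have K00: "0 \<le> K0" unfolding K0_def by simp
  have KBK1: "KB * K1 \<le> Q" and KBK0: "KB * K0 \<le> Q" and Q1: "1 \<le> Q"
    unfolding Q_def using KB0 K10 K00 by (simp_all add: algebra_simps)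
  define r' where "r' = min r (min 1 (1 / (4 * Q)))"
  define \<delta> where "\<delta> = r' / (2 * Q)"
  have r'0: "0 < r'" and r'1: "r' \<le> 1" and r'r: "r' \<le> r" and r'Q: "r' \<le> 1 / (4 * Q)"
    unfolding r'_def using r Q1 by (auto simp: min_le_iff_disj)
  have \<delta>0: "0 < \<delta>" and \<delta>r': "\<delta> \<le> r'" and Q\<delta>: "Q * \<delta> = r' / 2"
    unfolding \<delta>_def using r'0 Q1 by (auto simp: field_simps)
  show ?thesis
  proof (intro exI[of _ \<delta>] conjI allI impI \<delta>0)
    fix u' assume D: "utility_norm n N (\<lambda>i b. u' i b - u i b) \<le> \<delta>"
    have lin: "\<bar>charf n S u' p d - charf n S u' q d - (\<Sum>v\<in>I. ?L d v * (p v - q v))\<bar>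
        \<le> K1 * r' * (\<Sum>c\<in>I. \<bar>p c - q c\<bar>)"
      if "(\<Sum>c\<in>I. \<bar>p c - p0 c\<bar>) \<le> r'" "(\<Sum>c\<in>I. \<bar>q c - p0 c\<bar>) \<le> r'" "d \<in> I" for p q d
      using charf_quasi_linear[OF p0 _ r'1 _ that] r'0 D \<delta>r' unfolding K1_def by simp
    have start: "\<bar>charf n S u' p0 d - charf n S u p0 d\<bar> \<le> K0 * \<delta>" if "d \<in> I" for d
    proof -
      have "\<bar>charf n S u' p0 d - charf n S u p0 d\<bar> \<le> 2 * utility_norm n N (\<lambda>i b. u' i b - u i b) * 2 ^ n"
        using that p0 by (intro charf_perturbation_le) auto
      also have "\<dots> \<le> K0 * \<delta>" unfolding K0_def using D by simp
      finally show ?thesis .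
    qed
    have "KB * (K1 * r') \<le> Q * r'"
      using mult_right_mono[OF KBK1, of r'] r'0 by (simp add: mult.assoc)
    also have "\<dots> \<le> Q * (1 / (4 * Q))" using r'Q Q1 by (intro mult_left_mono) auto
    also have "\<dots> \<le> 1 / 2" using Q1 by simp
    finally have small_lin: "KB * (K1 * r') \<le> 1 / 2" .
    have small_start: "KB * (K0 * \<delta>) \<le> r' / 2"
      using mult_right_mono[OF KBK0, of \<delta>] \<delta>0 Q\<delta> by (simp add: mult.assoc)
    obtain p where p: "(\<Sum>c\<in>I. \<bar>p c - p0 c\<bar>) \<le> r'" and zero: "\<forall>d\<in>I. charf n S u' p d = charf n S u p0 d"
    proof -
      have "\<exists>p. (\<Sum>c\<in>I. \<bar>p c - p0 c\<bar>) \<le> r' \<and> (\<forall>d\<in>I. charf n S u' p d = charf n S u p0 d)"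
      proof (rule quasi_newton_zero[OF finite_var_idx _ left_inv right_inv, where \<kappa>="K1 * r'" and \<eta>="K0 * \<delta>"])
        show "0 \<le> r'" using r'0 by simp
      qed (use lin start small_lin small_start in \<open>simp_all add: KB_def\<close>)
      then show ?thesis using that by blast
    qed
    have "\<bar>p v - p0 v\<bar> \<le> r" if "v \<in> I" for v
      using member_le_sum[of v I "\<lambda>c. \<bar>p c - p0 c\<bar>"] that finite_var_idx p r'r by auto
    with zero show "\<exists>p. (\<forall>v\<in>I. \<bar>p v - p0 v\<bar> \<le> r) \<and> (\<forall>d\<in>I. charf n S u' p d = charf n S u p0 d)"
      by blast
  qed
qed

lemma nash_of_best_responses:
  assumes pos: "\<And>i l. i < n \<Longrightarrow> l \<in> S i \<Longrightarrow> 0 < p (i, l)"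
    and sum1: "\<And>i. i < n \<Longrightarrow> (\<Sum>l\<in>S i. p (i, l)) = 1"
    and best: "\<And>i k a. i < n \<Longrightarrow> k < N i \<Longrightarrow> a \<in> S i \<Longrightarrow> upart n S w i k p \<le> upart n S w i a p"
  defines "\<sigma>' \<equiv> \<lambda>j l. if l \<in> S j then p (j, l) else 0"
  shows "nash n N w \<sigma>'" and "\<And>i. i < n \<Longrightarrow> support N \<sigma>' i = S i"
    and "\<And>i a. i < n \<Longrightarrow> a \<in> S i \<Longrightarrow> eu n N w i \<sigma>' = upart n S w i a p"
proof -
  have upart_\<sigma>': "upart n S w i k (\<lambda>(j, l). \<sigma>' j l) = upart n S w i k p" for i k
    by (rule upart_cong) (auto simp: \<sigma>'_def var_idx_def)
  have dev: "eu n N w i (\<sigma>'(i := \<tau>)) = (\<Sum>k<N i. \<tau> k * upart n S w i k p)" if "i < n" for i \<tau>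
  proof -
    have "eu n N w i (\<sigma>'(i := \<tau>)) = (\<Sum>k<N i. \<tau> k * upart n S w i k (\<lambda>(j, l). \<sigma>' j l))"
      by (rule eu_fun_upd[OF that]) (simp add: \<sigma>'_def)
    then show ?thesis by (simp only: upart_\<sigma>')
  qed
  have sum_N: "(\<Sum>l<N i. \<sigma>' i l) = 1" if i: "i < n" for i
  proof -
    have "(\<Sum>l<N i. \<sigma>' i l) = (\<Sum>l\<in>S i. \<sigma>' i l)"
      by (rule sum.mono_neutral_right) (use S_sub[OF i] in \<open>auto simp: \<sigma>'_def\<close>)
    then show ?thesis using sum1[OF i] by (simp add: \<sigma>'_def)
  qed
  have mixed: "mixed N i (\<sigma>' i)" if "i < n" for i
    unfolding mixed_def using sum_N[OF that] pos[OF that] by (auto simp: \<sigma>'_def less_imp_le)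
  have payoff: "eu n N w i \<sigma>' = upart n S w i a p" if i: "i < n" and a: "a \<in> S i" for i a
  proof -
    have "eu n N w i \<sigma>' = (\<Sum>k<N i. \<sigma>' i k * upart n S w i k p)" using dev[OF i, of "\<sigma>' i"] by simp
    also have "\<dots> = (\<Sum>k<N i. \<sigma>' i k * upart n S w i a p)"
    proof (rule sum.cong[OF refl])
      fix k assume "k \<in> {..<N i}"
      then have "k \<in> S i \<Longrightarrow> upart n S w i k p = upart n S w i a p"
        using best[OF i _ a] best[OF i, of a k] a S_sub[OF i] by force
      then show "\<sigma>' i k * upart n S w i k p = \<sigma>' i k * upart n S w i a p" by (auto simp: \<sigma>'_def)
    qed
    also have "\<dots> = upart n S w i a p" using sum_N[OF i] by (simp add: sum_distrib_right[symmetric])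
    finally show ?thesis .
  qed
  then show "\<And>i a. i < n \<Longrightarrow> a \<in> S i \<Longrightarrow> eu n N w i \<sigma>' = upart n S w i a p" .
  show "support N \<sigma>' i = S i" if "i < n" for i
    unfolding support_def \<sigma>'_def using S_sub[OF that] pos[OF that] by force
  show "nash n N w \<sigma>'"
    unfolding nash_def
  proof (intro conjI allI impI mixed)
    fix i \<tau> assume i: "i < n" and \<tau>: "mixed N i \<tau>"
    obtain a where a: "a \<in> S i" using sum1[OF i] by fastforce
    have "eu n N w i (\<sigma>'(i := \<tau>)) \<le> (\<Sum>k<N i. \<tau> k * upart n S w i a p)"
      unfolding dev[OF i] using \<tau> best[OF i _ a] by (intro sum_mono mult_left_mono) (auto simp: mixed_def)
    also have "\<dots> = eu n N w i \<sigma>'"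
      using \<tau> payoff[OF i a] by (simp add: mixed_def sum_distrib_right[symmetric])
    finally show "eu n N w i (\<sigma>'(i := \<tau>)) \<le> eu n N w i \<sigma>'" .
  qed
qed

end

section \<open>Nash equilibria and their perturbations\<close>

lemma finite_pos_lower_bound:
  fixes f :: "'b \<Rightarrow> real"
  assumes "finite A" and "\<And>x. x \<in> A \<Longrightarrow> 0 < f x"
  shows "\<exists>m>0. \<forall>x\<in>A. m \<le> f x"
proof (intro exI conjI)
  show "0 < Min (insert 1 (f ` A))" using assms by (simp add: Min_gr_iff)
  show "\<forall>x\<in>A. Min (insert 1 (f ` A)) \<le> f x" using assms by simp
qed

lemma support_game_support: "support_game n N (support N \<sigma>)"
  by unfold_locales (auto simp: support_def)

locale nash_equilibrium =
  fixes n :: nat and N :: "nat \<Rightarrow> nat" and u :: "nat \<Rightarrow> (nat \<Rightarrow> nat) \<Rightarrow> real"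
    and \<sigma> :: "nat \<Rightarrow> nat \<Rightarrow> real"
  assumes nash: "nash n N u \<sigma>"
begin

sublocale support_game n N "support N \<sigma>"
  by (rule support_game_support)

abbreviation "S \<equiv> support N \<sigma>"
abbreviation "p0 \<equiv> \<lambda>(j, l). \<sigma> j l"

lemma support_sum_eq_1: "i < n \<Longrightarrow> (\<Sum>l\<in>S i. \<sigma> i l) = 1"
proof -
  assume i: "i < n"
  have "(\<Sum>l\<in>S i. \<sigma> i l) = (\<Sum>l<N i. \<sigma> i l)"
    by (rule sum.mono_neutral_left) (auto simp: support_def)
  then show ?thesis using nash i unfolding nash_def mixed_def by simp
qed

lemma ref_act_in_support: "i < n \<Longrightarrow> ref_act S i \<in> S i"
  using support_sum_eq_1 by (intro ref_act_in) fastforce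

lemma p0_bounds:
  assumes "v \<in> I" shows "0 < p0 v" and "p0 v \<le> 1"
proof -
  obtain i l where v: "v = (i, l)" and i: "i < n" and l: "l \<in> S i"
    using assms unfolding var_idx_def by auto
  have nonneg: "\<forall>k<N i. 0 \<le> \<sigma> i k" using nash i unfolding nash_def mixed_def by simp
  with l show "0 < p0 v" unfolding v support_def by force
  have "\<sigma> i l \<le> (\<Sum>k\<in>S i. \<sigma> i k)"
    using l nonneg S_fin S_sub[OF i] by (intro member_le_sum) auto
  then show "p0 v \<le> 1" using support_sum_eq_1[OF i] v by simp
qed

lemma eu_deviation:
  "i < n \<Longrightarrow> eu n N w i (\<sigma>(i := \<tau>)) = (\<Sum>k<N i. \<tau> k * upart n S w i k p0)"
  by (rule eu_fun_upd) (auto simp: support_def)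

lemma indifference:
  assumes i: "i < n"
  shows "k < N i \<Longrightarrow> upart n S u i k p0 \<le> eu n N u i \<sigma>"
    and "k \<in> S i \<Longrightarrow> upart n S u i k p0 = eu n N u i \<sigma>"
proof -
  let ?U = "\<lambda>k. upart n S u i k p0"
  have le: "?U k \<le> eu n N u i \<sigma>" if k: "k < N i" for k
  proof -
    have "eu n N u i (\<sigma>(i := (\<lambda>l. if l = k then 1 else 0))) \<le> eu n N u i \<sigma>"
      using nash i k unfolding nash_def by (simp add: mixed_def)
    moreover have "eu n N u i (\<sigma>(i := (\<lambda>l. if l = k then 1 else 0))) = ?U k"
    proof -
      have "(\<Sum>k'<N i. (if k' = k then 1 else 0) * ?U k') = (\<Sum>k'<N i. if k' = k then ?U k' else 0)"
        by (rule sum.cong) auto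
      then show ?thesis unfolding eu_deviation[OF i] using k by simp
    qed
    ultimately show ?thesis by simp
  qed
  then show "k < N i \<Longrightarrow> ?U k \<le> eu n N u i \<sigma>" .
  have sum1: "(\<Sum>k<N i. \<sigma> i k) = 1" using nash i unfolding nash_def mixed_def by simp
  have "(\<Sum>k<N i. \<sigma> i k * (eu n N u i \<sigma> - ?U k))
      = eu n N u i \<sigma> * (\<Sum>k<N i. \<sigma> i k) - (\<Sum>k<N i. \<sigma> i k * ?U k)"
    by (simp add: algebra_simps sum_subtractf sum_distrib_left)
  also have "\<dots> = 0" using eu_deviation[OF i, of u "\<sigma> i"] sum1 by simp
  finally have "(\<Sum>k<N i. \<sigma> i k * (eu n N u i \<sigma> - ?U k)) = 0" .
  moreover have "\<forall>k\<in>{..<N i}. 0 \<le> \<sigma> i k * (eu n N u i \<sigma> - ?U k)"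
    using nash i le unfolding nash_def mixed_def by auto
  ultimately have "\<forall>k\<in>{..<N i}. \<sigma> i k * (eu n N u i \<sigma> - ?U k) = 0"
    using sum_nonneg_eq_0_iff[of "{..<N i}" "\<lambda>k. \<sigma> i k * (eu n N u i \<sigma> - ?U k)"] by simp
  then show "k \<in> S i \<Longrightarrow> ?U k = eu n N u i \<sigma>" unfolding support_def by auto
qed

lemma charf_at_equilibrium:
  assumes "i < n" "k \<in> S i"
  shows "charf n S u p0 (i, k) = (if k = ref_act S i then 1 else 0)"
  using support_sum_eq_1 indifference(2)[OF assms] indifference(2)[OF assms(1) ref_act_in_support]
    assms unfolding charf_def by simp

lemma nondegenerate_jacobian_gap:
  assumes "nondegenerate n N u \<sigma>"
  shows "det_on I (charf_deriv n S u p0) \<noteq> 0"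
    and "\<And>i k. i < n \<Longrightarrow> k < N i \<Longrightarrow> k \<notin> S i \<Longrightarrow> upart n S u i k p0 < upart n S u i (ref_act S i) p0"
proof -
  have "(\<lambda>c v. deriv (\<lambda>t. charf n S u (p0(v := t)) c) (p0 v)) = charf_deriv n S u p0"
    by (intro ext deriv_charf S_fin)
  then show "det_on I (charf_deriv n S u p0) \<noteq> 0"
    "\<And>i k. i < n \<Longrightarrow> k < N i \<Longrightarrow> k \<notin> S i \<Longrightarrow> upart n S u i k p0 < upart n S u i (ref_act S i) p0"
    using assms unfolding nondegenerate_def Let_def by auto
qed

lemma support_prob_lower_bound: "\<exists>\<mu>>0. \<forall>v\<in>I. \<mu> \<le> p0 v"
  using finite_pos_lower_bound[OF finite_var_idx, of p0] p0_bounds(1) by blast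

lemma residual_gap_lower_bound:
  assumes "nondegenerate n N u \<sigma>"
  shows "\<exists>\<rho>>0. \<forall>i k. i < n \<longrightarrow> k < N i \<longrightarrow> k \<notin> S i \<longrightarrow>
           \<rho> \<le> upart n S u i (ref_act S i) p0 - upart n S u i k p0"
proof -
  let ?A = "{(i, k). i < n \<and> k < N i \<and> k \<notin> S i}"
  have "finite ?A" by (rule finite_subset[of _ "Sigma {..<n} (\<lambda>i. {..<N i})"]) auto
  then obtain \<rho> where "0 < \<rho>"
    and "\<forall>x\<in>?A. \<rho> \<le> (\<lambda>(i, k). upart n S u i (ref_act S i) p0 - upart n S u i k p0) x"
    using finite_pos_lower_bound[of ?A "\<lambda>(i, k). upart n S u i (ref_act S i) p0 - upart n S u i k p0"]
      nondegenerate_jacobian_gap(2)[OF assms] by force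
  then show ?thesis by auto
qed

text \<open>The residual gaps of \<open>\<sigma>\<close> keep the unused actions unprofitable in the perturbed game.\<close>

lemma perturbed_equilibrium:
  assumes gap: "\<And>i k. i < n \<Longrightarrow> k < N i \<Longrightarrow> k \<notin> S i \<Longrightarrow>
      2 * \<eta> \<le> upart n S u i (ref_act S i) p0 - upart n S u i k p0"
    and zero: "\<forall>d\<in>I. charf n S u' p d = charf n S u p0 d"
    and pos: "\<forall>v\<in>I. 0 < p v"
    and near: "\<forall>i<n. \<forall>a<N i. \<bar>upart n S u' i a p - upart n S u i a p0\<bar> \<le> \<eta>"
  shows "\<exists>\<sigma>'. nash n N u' \<sigma>' \<and> (\<forall>i<n. support N \<sigma>' i = S i) \<and> (\<forall>i<n. eu n N u' i \<sigma>' - eu n N u i \<sigma> \<le> \<eta>)"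
proof -
  let ?U' = "\<lambda>i k. upart n S u' i k p"
  have ref: "ref_act S i \<in> S i" "ref_act S i < N i" if "i < n" for i
    using ref_act_in_support[OF that] S_sub[OF that] by auto
  have charf_zero: "charf n S u' p (i, k) = (if k = ref_act S i then 1 else 0)" if "i < n" "k \<in> S i" for i k
    using zero charf_at_equilibrium[OF that] that unfolding var_idx_def by auto
  have sum1: "(\<Sum>l\<in>S i. p (i, l)) = 1" if "i < n" for i
    using charf_zero[OF that ref(1)[OF that]] unfolding charf_def by simp
  have equal: "?U' i k = ?U' i (ref_act S i)" if "i < n" "k \<in> S i" for i k
    using charf_zero[OF that] unfolding charf_def by (auto split: if_splits)
  have best: "?U' i k \<le> ?U' i a" if i: "i < n" and k: "k < N i" and a: "a \<in> S i" for i k a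
  proof (cases "k \<in> S i")
    case False
    have "\<bar>?U' i k - upart n S u i k p0\<bar> \<le> \<eta>"
      and "\<bar>?U' i (ref_act S i) - upart n S u i (ref_act S i) p0\<bar> \<le> \<eta>"
      using near i k ref[OF i] by auto
    then have "?U' i k \<le> ?U' i (ref_act S i)"
      using gap[OF i k False] by (simp add: abs_le_iff)
    then show ?thesis using equal[OF i a] by simp
  qed (use equal i a in simp)
  have "nash n N u' (\<lambda>j l. if l \<in> S j then p (j, l) else 0)"
    and "\<And>i. i < n \<Longrightarrow> support N (\<lambda>j l. if l \<in> S j then p (j, l) else 0) i = S i"
    and "\<And>i. i < n \<Longrightarrow> eu n N u' i (\<lambda>j l. if l \<in> S j then p (j, l) else 0) = ?U' i (ref_act S i)"
    using nash_of_best_responses[of p u'] pos sum1 best ref unfolding var_idx_def by auto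
  moreover have "?U' i (ref_act S i) - eu n N u i \<sigma> \<le> \<eta>" if "i < n" for i
  proof -
    have "\<bar>?U' i (ref_act S i) - upart n S u i (ref_act S i) p0\<bar> \<le> \<eta>"
      using near that ref[OF that] by auto
    then show ?thesis using indifference(2)[OF that ref(1)[OF that]] by (simp add: abs_le_iff)
  qed
  ultimately show ?thesis by (intro exI[of _ "\<lambda>j l. if l \<in> S j then p (j, l) else 0"]) auto
qed

lemma perturbed_charf_zero:
  assumes nondeg: "nondegenerate n N u \<sigma>" and \<eta>: "0 < \<eta>"
  shows "\<exists>\<delta>>0. \<forall>u'. utility_norm n N (\<lambda>i b. u' i b - u i b) \<le> \<delta> \<longrightarrow>
     (\<exists>p. (\<forall>d\<in>I. charf n S u' p d = charf n S u p0 d) \<and> (\<forall>v\<in>I. 0 < p v) \<and>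
          (\<forall>i<n. \<forall>a<N i. \<bar>upart n S u' i a p - upart n S u i a p0\<bar> \<le> \<eta>))"
proof -
  obtain \<mu> where \<mu>: "0 < \<mu>" "\<forall>v\<in>I. \<mu> \<le> p0 v" using support_prob_lower_bound by blast
  have p0_le_1: "\<forall>v\<in>I. \<bar>p0 v\<bar> \<le> 1" using p0_bounds by fastforce
  obtain r where r: "0 < r" and near: "\<forall>u' p. utility_norm n N (\<lambda>i b. u' i b - u i b) \<le> r \<longrightarrow>
      (\<forall>v\<in>I. \<bar>p v - p0 v\<bar> \<le> r) \<longrightarrow> (\<forall>i<n. \<forall>a<N i. \<bar>upart n S u' i a p - upart n S u i a p0\<bar> \<le> \<eta>)"
    using upart_near[OF p0_le_1 \<eta>] by blast
  obtain \<delta>' where \<delta>': "0 < \<delta>'" and zero: "\<forall>u'. utility_norm n N (\<lambda>i b. u' i b - u i b) \<le> \<delta>' \<longrightarrow>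
      (\<exists>p. (\<forall>v\<in>I. \<bar>p v - p0 v\<bar> \<le> min r (\<mu> / 2)) \<and> (\<forall>d\<in>I. charf n S u' p d = charf n S u p0 d))"
    using charf_zero_near[OF nondegenerate_jacobian_gap(1)[OF nondeg] p0_le_1, of "min r (\<mu> / 2)"] r \<mu>
    by auto
  show ?thesis
  proof (intro exI[of _ "min \<delta>' r"] conjI allI impI)
    show "0 < min \<delta>' r" using \<delta>' r by simp
    fix u' assume D: "utility_norm n N (\<lambda>i b. u' i b - u i b) \<le> min \<delta>' r"
    then obtain p where p: "\<forall>v\<in>I. \<bar>p v - p0 v\<bar> \<le> min r (\<mu> / 2)"
      and p_zero: "\<forall>d\<in>I. charf n S u' p d = charf n S u p0 d" using zero by auto
    have "0 < p v" if "v \<in> I" for v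
    proof -
      have "\<bar>p v - p0 v\<bar> \<le> \<mu> / 2" "\<mu> \<le> p0 v" using p \<mu>(2) that by auto
      then show ?thesis using \<mu>(1) abs_ge_minus_self[of "p v - p0 v"] by linarith
    qed
    moreover have "\<forall>v\<in>I. \<bar>p v - p0 v\<bar> \<le> r" using p by auto
    then have "\<forall>i<n. \<forall>a<N i. \<bar>upart n S u' i a p - upart n S u i a p0\<bar> \<le> \<eta>" using near D by auto
    ultimately show "\<exists>p. (\<forall>d\<in>I. charf n S u' p d = charf n S u p0 d) \<and> (\<forall>v\<in>I. 0 < p v) \<and>
        (\<forall>i<n. \<forall>a<N i. \<bar>upart n S u' i a p - upart n S u i a p0\<bar> \<le> \<eta>)" using p_zero by blast
  qed
qed

end

lemma utility_norm_le_game_dist: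
  "utility_norm n N (\<lambda>i b. u' i b - u i b) \<le> real n * real (card (profiles n N)) * game_dist n N u u'"
proof -
  have "\<bar>u' i b - u i b\<bar> \<le> game_dist n N u u'" if "i < n" "b \<in> profiles n N" for i b
  proof -
    have "\<bar>u i b - u' i b\<bar> \<le> game_dist n N u u'"
      unfolding game_dist_def using that by (intro Max_ge) (auto intro: finite_SigmaI finite_profiles)
    then show ?thesis by (simp add: abs_minus_commute)
  qed
  then have "utility_norm n N (\<lambda>i b. u' i b - u i b) \<le> (\<Sum>i<n. \<Sum>b\<in>profiles n N. game_dist n N u u')"
    unfolding utility_norm_def by (intro sum_mono) auto
  then show ?thesis by simp
qed

lemma game_dist_small_imp_utility_norm_small:
  assumes "0 < \<epsilon>"
  shows "\<exists>\<delta>>0. \<forall>u'. game_dist n N u u' < \<delta> \<longrightarrow> utility_norm n N (\<lambda>i b. u' i b - u i b) \<le> \<epsilon>"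
proof -
  define C where "C = real n * real (card (profiles n N))"
  have C0: "0 \<le> C" unfolding C_def by simp
  show ?thesis
  proof (intro exI[of _ "\<epsilon> / (C + 1)"] conjI allI impI)
    show "0 < \<epsilon> / (C + 1)" using assms C0 by simp
    fix u' assume "game_dist n N u u' < \<epsilon> / (C + 1)"
    then have "C * game_dist n N u u' \<le> C * (\<epsilon> / (C + 1))" using C0 by (intro mult_left_mono) auto
    also have "\<dots> \<le> \<epsilon>" using assms C0 by (simp add: field_simps)
    finally show "utility_norm n N (\<lambda>i b. u' i b - u i b) \<le> \<epsilon>"
      using utility_norm_le_game_dist[of n N u' u] unfolding C_def by linarith
  qed
qed

theorem theorem1:
  fixes n :: nat and N :: "nat \<Rightarrow> nat"
    and u :: "nat \<Rightarrow> (nat \<Rightarrow> nat) \<Rightarrow> real" and \<sigma> :: "nat \<Rightarrow> nat \<Rightarrow> real"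
  assumes "nash n N u \<sigma>" and "nondegenerate n N u \<sigma>"
  shows "\<forall>\<epsilon>>0. \<exists>\<delta>>0. \<forall>u'. game_dist n N u u' < \<delta> \<longrightarrow>
           (\<exists>\<sigma>'. nash n N u' \<sigma>' \<and> (\<forall>i<n. support N \<sigma>' i = support N \<sigma> i) \<and>
                 (\<forall>i<n. eu n N u' i \<sigma>' - eu n N u i \<sigma> < \<epsilon>))"
proof (intro allI impI)
  fix \<epsilon> :: real assume \<epsilon>: "0 < \<epsilon>"
  interpret nash_equilibrium n N u \<sigma> by (rule nash_equilibrium.intro) (rule assms(1))
  obtain \<rho> where \<rho>: "0 < \<rho>" and gap: "\<forall>i k. i < n \<longrightarrow> k < N i \<longrightarrow> k \<notin> S i \<longrightarrow>
      \<rho> \<le> upart n S u i (ref_act S i) p0 - upart n S u i k p0"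
    using residual_gap_lower_bound[OF assms(2)] by blast
  define \<eta> where "\<eta> = min (\<epsilon> / 2) (\<rho> / 2)"
  have "0 < \<eta>" unfolding \<eta>_def using \<epsilon> \<rho> by simp
  then obtain \<delta>' where "0 < \<delta>'" and zero: "\<forall>u'. utility_norm n N (\<lambda>i b. u' i b - u i b) \<le> \<delta>' \<longrightarrow>
      (\<exists>p. (\<forall>d\<in>I. charf n S u' p d = charf n S u p0 d) \<and> (\<forall>v\<in>I. 0 < p v) \<and>
           (\<forall>i<n. \<forall>a<N i. \<bar>upart n S u' i a p - upart n S u i a p0\<bar> \<le> \<eta>))"
    using perturbed_charf_zero[OF assms(2)] by blast
  obtain \<delta> where "0 < \<delta>"
    and small: "\<forall>u'. game_dist n N u u' < \<delta> \<longrightarrow> utility_norm n N (\<lambda>i b. u' i b - u i b) \<le> \<delta>'"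
    using game_dist_small_imp_utility_norm_small[OF \<open>0 < \<delta>'\<close>] by blast
  have gap_\<eta>: "2 * \<eta> \<le> upart n S u i (ref_act S i) p0 - upart n S u i k p0"
    if "i < n" "k < N i" "k \<notin> S i" for i k
    using gap that min.cobounded2[of "\<epsilon> / 2" "\<rho> / 2"] unfolding \<eta>_def by fastforce
  show "\<exists>\<delta>>0. \<forall>u'. game_dist n N u u' < \<delta> \<longrightarrow>
      (\<exists>\<sigma>'. nash n N u' \<sigma>' \<and> (\<forall>i<n. support N \<sigma>' i = S i) \<and> (\<forall>i<n. eu n N u' i \<sigma>' - eu n N u i \<sigma> < \<epsilon>))"
  proof (intro exI[of _ \<delta>] conjI allI impI \<open>0 < \<delta>\<close>)
    fix u' assume "game_dist n N u u' < \<delta>"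
    then obtain p where "\<forall>d\<in>I. charf n S u' p d = charf n S u p0 d" "\<forall>v\<in>I. 0 < p v"
      "\<forall>i<n. \<forall>a<N i. \<bar>upart n S u' i a p - upart n S u i a p0\<bar> \<le> \<eta>"
      using small zero by blast
    then obtain \<sigma>' where \<sigma>': "nash n N u' \<sigma>'" "\<forall>i<n. support N \<sigma>' i = S i"
      "\<forall>i<n. eu n N u' i \<sigma>' - eu n N u i \<sigma> \<le> \<eta>"
      using perturbed_equilibrium[OF gap_\<eta>] by blast
    have "eu n N u' i \<sigma>' - eu n N u i \<sigma> < \<epsilon>" if "i < n" for i
      using \<sigma>'(3)[rule_format, OF that] \<epsilon> unfolding \<eta>_def by linarith
    with \<sigma>'(1,2) show "\<exists>\<sigma>'. nash n N u' \<sigma>' \<and> (\<forall>i<n. support N \<sigma>' i = S i) \<and>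
        (\<forall>i<n. eu n N u' i \<sigma>' - eu n N u i \<sigma> < \<epsilon>)" by blast
  qed
qed

end
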